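(* Let $X$ be a finite, connected geometric simplicial complex with vertex set $V$, let $q \in [1,\infty)$, and let $f,g: X \to \mathbb{R}$ be functions each obtained from a function on $V$ by extending linearly over the simplices of $X$. Let $p$ be a balanced probability distribution on $V$. Then \[ d^{GW}_q(G_f,G_g) \leq \tfrac{1}{2}\, |V|^{2/q}\, \|f-g\|_{L^q(p)}. \]
   Context: Merge tree: for $f: X\to\mathbb{R}$, declare $x\sim y$ if $f(x)=f(y)=a$ and $x,y$ lie in the same connected component of the sublevel set $f^{-1}(-\infty,a]$; the merge tree is the quotient $T_f = X/\!\sim$, and $f$ descends to a function on $T_f$ (still denoted $f$). Let $\pi_f: V \to T_f$ be the restriction of the quotient map to the vertex set. The least common ancestor (LCA) matrix $W_f \in \mathbb{R}^{V\times V}$ is defined by $W_f(v,w)$ = the maximum value of $f$ along the unique geodesic (simple) path from $\pi_f(v)$ to $\pi_f(w)$ in the tree $T_f$. A probability distribution $p$ on $V$ is balanced if $p(u)p(v)\le p(w)$ for all $u,v,w\in V$. The measure network of $f$ is $G_f=(V,p,W_f)$. Weighted norm: $\|h\|_{L^q(p)} = (\sum_{v\in V}|h(v)|^q p(v))^{1/q}$ for $h:V\to\mathbb{R}$. For finite measure networks $G_1=(V_1,p_1,W_1)$, $G_2=(V_2,p_2,W_2)$ (with $p_i$ probability vectors and $W_i$ real square matrices indexed by $V_i$), let $\mathcal{C}(p_1,p_2)$ be the set of nonnegative matrices $C\in\mathbb{R}_+^{V_1\times V_2}$ with row sums $p_1$ and column sums $p_2$, and \[ d^{GW}_q(G_1,G_2)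 = \tfrac12 \min_{C\in\mathcal{C}(p_1,p_2)} \Big(\sum_{i,k\in V_1}\sum_{j,l\in V_2} |W_1(i,k)-W_2(j,l)|^q C_{i,j}C_{k,l}\Big)^{1/q}. \] *)

theory Defs
  imports "HOL-Analysis.Analysis"
begin

definition geom_simplicial_complex :: "'v set set \<Rightarrow> ('v \<Rightarrow> 'a::euclidean_space) \<Rightarrow> bool" where
  "geom_simplicial_complex K pos \<longleftrightarrow>
     finite K \<and>
     (\<forall>\<sigma>\<in>K. \<sigma> \<noteq> {} \<and> finite \<sigma> \<and> (\<forall>\<tau>. \<tau> \<subseteq> \<sigma> \<and> \<tau> \<noteq> {} \<longrightarrow> \<tau> \<in> K)) \<and>
     (\<forall>\<sigma>\<in>K. inj_on pos \<sigma> \<and> \<not> affine_dependent (pos ` \<sigma>)) \<and>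
     (\<forall>\<sigma>\<in>K. \<forall>\<tau>\<in>K. convex hull (pos ` \<sigma>) \<inter> convex hull (pos ` \<tau>) = convex hull (pos ` (\<sigma> \<inter> \<tau>)))"

definition vertices :: "'v set set \<Rightarrow> 'v set" where
  "vertices K = \<Union>K"

definition realization :: "'v set set \<Rightarrow> ('v \<Rightarrow> 'a::euclidean_space) \<Rightarrow> 'a set" where
  "realization K pos = (\<Union>\<sigma>\<in>K. convex hull (pos ` \<sigma>))"

definition piecewise_linear :: "'v set set \<Rightarrow> ('v \<Rightarrow> 'a::euclidean_space) \<Rightarrow> ('a \<Rightarrow> real) \<Rightarrow> bool" where
  "piecewise_linear K pos f \<longleftrightarrow>
     (\<forall>\<sigma>\<in>K. \<forall>l::'v \<Rightarrow> real. (\<forall>v\<in>\<sigma>. 0 \<le> l v) \<and> sum l \<sigma> = 1 \<longrightarrow>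
        f (\<Sum>v\<in>\<sigma>. l v *\<^sub>R pos v) = (\<Sum>v\<in>\<sigma>. l v * f (pos v)))"

definition merge_rel :: "'a::euclidean_space set \<Rightarrow> ('a \<Rightarrow> real) \<Rightarrow> 'a \<Rightarrow> 'a \<Rightarrow> bool" where
  "merge_rel X f x y \<longleftrightarrow> x \<in> X \<and> y \<in> X \<and> f x = f y \<and>
      connected_component {z \<in> X. f z \<le> f x} x y"

definition merge_class :: "'a::euclidean_space set \<Rightarrow> ('a \<Rightarrow> real) \<Rightarrow> 'a \<Rightarrow> 'a set" where
  "merge_class X f x = {y. merge_rel X f x y}"

definition merge_tree :: "'a::euclidean_space set \<Rightarrow> ('a \<Rightarrow> real) \<Rightarrow> 'a set topology" where
  "merge_tree X f = topology (\<lambda>U. U \<subseteq> merge_class X f ` X \<and>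
      openin (top_of_set X) {x \<in> X. merge_class X f x \<in> U})"

definition merge_fun :: "('a \<Rightarrow> real) \<Rightarrow> 'a set \<Rightarrow> real" where
  "merge_fun f c = f (SOME x. x \<in> c)"

text \<open>LCA matrix: maximum of f along the unique geodesic (simple path, i.e. arc,
or the constant path if the endpoints coincide) in T_f from pi_f(v) to pi_f(w).\<close>
definition lca_matrix :: "'v set set \<Rightarrow> ('v \<Rightarrow> 'a::euclidean_space) \<Rightarrow> ('a \<Rightarrow> real) \<Rightarrow> 'v \<Rightarrow> 'v \<Rightarrow> real" where
  "lca_matrix K pos f v w =
     (let X = realization K pos; T = merge_tree X f;
          a = merge_class X f (pos v); b = merge_class X f (pos w)
      in if a = b then merge_fun f a
         else (SOME m. \<exists>\<gamma>. pathin T \<gamma> \<and> inj_on \<gamma> {0..1} \<and> \<gamma> 0 = a \<and> \<gamma> 1 = b \<and>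
                   m = Sup (merge_fun f ` \<gamma> ` {0..1})))"

definition balanced :: "'v set \<Rightarrow> ('v \<Rightarrow> real) \<Rightarrow> bool" where
  "balanced V p \<longleftrightarrow> (\<forall>u\<in>V. \<forall>v\<in>V. \<forall>w\<in>V. p u * p v \<le> p w)"

definition prob_vector :: "'v set \<Rightarrow> ('v \<Rightarrow> real) \<Rightarrow> bool" where
  "prob_vector V p \<longleftrightarrow> (\<forall>v\<in>V. 0 \<le> p v) \<and> sum p V = 1"

definition Lq_norm :: "real \<Rightarrow> 'v set \<Rightarrow> ('v \<Rightarrow> real) \<Rightarrow> ('v \<Rightarrow> real) \<Rightarrow> real" where
  "Lq_norm q V p h = (\<Sum>v\<in>V. \<bar>h v\<bar> powr q * p v) powr (1 / q)"

definition couplings :: "'v set \<Rightarrow> ('v \<Rightarrow> real) \<Rightarrow> 'w set \<Rightarrow> ('w \<Rightarrow> real) \<Rightarrow> ('v \<Rightarrow> 'w \<Rightarrow> real) set" where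
  "couplings V1 p1 V2 p2 = {C. (\<forall>i\<in>V1. \<forall>j\<in>V2. 0 \<le> C i j) \<and>
       (\<forall>i\<in>V1. (\<Sum>j\<in>V2. C i j) = p1 i) \<and> (\<forall>j\<in>V2. (\<Sum>i\<in>V1. C i j) = p2 j)}"

text \<open>Gromov-Wasserstein q-distance; the minimum is written as an infimum
(the feasible set is compact, so the infimum is attained).\<close>
definition dGW :: "real \<Rightarrow> 'v set \<Rightarrow> ('v \<Rightarrow> real) \<Rightarrow> ('v \<Rightarrow> 'v \<Rightarrow> real)
                   \<Rightarrow> 'w set \<Rightarrow> ('w \<Rightarrow> real) \<Rightarrow> ('w \<Rightarrow> 'w \<Rightarrow> real) \<Rightarrow> real" where
  "dGW q V1 p1 W1 V2 p2 W2 = 1/2 * Inf ((\<lambda>C.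
      (\<Sum>i\<in>V1. \<Sum>k\<in>V1. \<Sum>j\<in>V2. \<Sum>l\<in>V2. \<bar>W1 i k - W2 j l\<bar> powr q * C i j * C k l) powr (1/q))
      ` couplings V1 p1 V2 p2)"

end

theory Submission
  imports Defs
begin

text \<open>The LCA value W_f(v, w) is the least level r at which v and w lie in one component of
  the sublevel set {f \<le> r}. Indeed, an arc of the merge tree joining their classes and staying
  below r lifts into that component, and conversely an arc cannot rise above a level at which its
  endpoints are already joined, since its strict maximum would be flanked by two points of a
  single merge class. Arcs exist because f, together with the heights at which a point joins each
  vertex, embeds the merge tree injectively into a Banach space, where paths contain arcs.

  Let \<epsilon> be the largest value of |f - g| at a vertex; by piecewise linearity it bounds |f - g|
  everywhere. Each sublevel set of f then lies in the sublevel set of g at the level raised by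
  \<epsilon> and vice versa, so the LCA matrices differ entrywise by at most \<epsilon>, and the diagonal
  coupling gives d_GW \<le> \<epsilon>/2. Finally, balancedness forces every weight to be at least |V|^-2,
  because the largest weight is at least 1/|V|; hence \<epsilon> \<le> |V|^(2/q) \<parallel>f - g\<parallel>_L^q(p).\<close>

lemma exists_le_convex_combination:
  fixes a l :: "'v \<Rightarrow> real"
  assumes "finite S" "\<forall>v\<in>S. 0 \<le> l v" "sum l S = 1"
  shows "\<exists>u\<in>S. a u \<le> (\<Sum>v\<in>S. l v * a v)"
proof -
  have "S \<noteq> {}" using assms(3) by auto
  then obtain u where u: "u \<in> S" "\<forall>v\<in>S. a u \<le> a v"
    using arg_min_if_finite[OF assms(1), of a] by (meson not_less)
  have "a u = (\<Sum>v\<in>S. l v * a u)" using assms(3) by (simp add: sum_distrib_right[symmetric])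
  also have "\<dots> \<le> (\<Sum>v\<in>S. l v * a v)" using u assms(2) by (intro sum_mono mult_left_mono) auto
  finally show ?thesis using u(1) by blast
qed

lemma strict_max_level_crossing:
  fixes g :: "real \<Rightarrow> real"
  assumes cont: "continuous_on {0..1} g" and ts: "0 < ts" "ts < 1"
    and strict: "\<And>t. t \<in> {0..1} \<Longrightarrow> t \<noteq> ts \<Longrightarrow> g t < g ts" and h: "h < g ts"
  obtains s1 s2 where "0 \<le> s1" "s1 < ts" "ts < s2" "s2 \<le> 1" "g s1 = g s2" "h < g s1"
proof -
  obtain \<delta> where \<delta>: "\<delta> > 0" "\<forall>t\<in>{0..1}. dist t ts < \<delta> \<longrightarrow> dist (g t) (g ts) < g ts - h"
    using cont ts h unfolding continuous_on_iff by (metis atLeastAtMost_iff diff_gt_0_iff_gt less_eq_real_def)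
  define d where "d = min (\<delta>/2) (min (ts/2) ((1 - ts)/2))"
  have d: "0 < d" "d < \<delta>" "d < ts" "d < 1 - ts" using \<delta>(1) ts unfolding d_def min_def by auto
  have near: "h < g t \<and> g t < g ts" if "t = ts - d \<or> t = ts + d" for t
  proof -
    have t: "t \<in> {0..1}" "t \<noteq> ts" using that d by auto
    then have "dist (g t) (g ts) < g ts - h" using \<delta>(2) that d by (auto simp: dist_real_def)
    then show ?thesis using strict[OF t] by (auto simp: dist_real_def)
  qed
  define u where "u = max (g (ts - d)) (g (ts + d))"
  have near1: "h < g (ts - d)" "g (ts - d) < g ts" and near2: "h < g (ts + d)" "g (ts + d) < g ts"
    using near by blast+
  have u: "h < u" "u < g ts" using near1 near2 by (auto simp: u_def)
  have sub1: "{ts - d..ts} \<subseteq> {0..1}" and sub2: "{ts..ts + d} \<subseteq> {0..1}" using d ts by auto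
  obtain s1 where s1: "ts - d \<le> s1" "s1 \<le> ts" "g s1 = u"
    using IVT'[of g "ts - d" u ts] continuous_on_subset[OF cont sub1] u d near1 near2 by (force simp: u_def)
  obtain s2 where s2: "ts \<le> s2" "s2 \<le> ts + d" "g s2 = u"
    using IVT2'[of g "ts + d" u ts] continuous_on_subset[OF cont sub2] u d near1 near2 by (force simp: u_def)
  have "s1 \<noteq> ts" "s2 \<noteq> ts" using s1(3) s2(3) u by auto
  then show thesis using that[of s1 s2] s1 s2 u d by auto
qed

lemma affine_independent_linear_extension:
  fixes c :: "'a::euclidean_space \<Rightarrow> real"
  assumes "\<not> affine_dependent S" "s0 \<in> S"
  obtains L where "linear L" "\<forall>x\<in>S. L (x - s0) = c x - c s0"
proof -
  define S' where "S' = S - {s0}"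
  have "S = insert s0 S'" "s0 \<notin> S'" using assms(2) by (auto simp: S'_def)
  then have "\<not> dependent ((\<lambda>x. -s0 + x) ` S')"
    using assms(1) affine_dependent_iff_dependent[of s0 S'] by metis
  then obtain L where L: "linear L" "\<forall>b\<in>(\<lambda>x. -s0 + x) ` S'. L b = c (b + s0) - c s0"
    using linear_independent_extend[of "(\<lambda>x. -s0 + x) ` S'" "\<lambda>b. c (b + s0) - c s0"] by blast
  have "\<forall>x\<in>S. L (x - s0) = c x - c s0"
  proof
    fix x assume x: "x \<in> S"
    show "L (x - s0) = c x - c s0"
    proof (cases "x = s0")
      case False
      then have "-s0 + x \<in> (\<lambda>x. -s0 + x) ` S'" using x by (auto simp: S'_def)
      then show ?thesis using L(2) by auto
    qed (simp add: L(1) linear_0)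
  qed
  then show thesis by (rule that[OF L(1)])
qed

lemma finite_gap_below:
  fixes A :: "real set"
  assumes "finite A" "r < v"
  obtains h where "r \<le> h" "h < v" "\<forall>a\<in>A. a < v \<longrightarrow> a \<le> h"
proof -
  define h where "h = Max (insert r {a \<in> A. a < v})"
  have fin: "finite (insert r {a \<in> A. a < v})" using assms(1) by simp
  show thesis
  proof (rule that[of h])
    show "r \<le> h" unfolding h_def using fin by simp
    show "h < v" unfolding h_def using fin assms(2) by (subst Max_less_iff) auto
    show "\<forall>a\<in>A. a < v \<longrightarrow> a \<le> h" unfolding h_def using fin by simp
  qed
qed

text \<open>An injective continuous image of a path in a Banach space contains an arc; pulling it
  back along the inverse, which is continuous on the compact image of the path, gives an arc in
  the original space.\<close>
lemma pathin_contains_arc_by_embedding: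
  fixes \<Phi> :: "'x \<Rightarrow> 'b::{complete_space,real_normed_vector}"
  assumes p: "pathin T p" and \<Phi>: "continuous_map T euclidean \<Phi>" and inj: "inj_on \<Phi> (p ` {0..1})"
    and ne: "p 0 \<noteq> p 1"
  obtains \<gamma> where "pathin T \<gamma>" "inj_on \<gamma> {0..1}" "\<gamma> 0 = p 0" "\<gamma> 1 = p 1"
proof -
  define P where "P = p ` {0..1}"
  have P: "compactin T P" unfolding P_def using compactin_path_image[OF p] .
  have "continuous_map (subtopology euclideanreal {0..1}) euclidean (\<Phi> \<circ> p)"
    using continuous_map_compose[OF p[unfolded pathin_def] \<Phi>] .
  then have "path (\<Phi> \<circ> p)" by (simp add: path_def)
  moreover have "\<Phi> (p 0) \<noteq> \<Phi> (p 1)" using inj ne by (auto simp: P_def dest: inj_onD)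
  ultimately obtain q where q: "arc q" "path_image q \<subseteq> \<Phi> ` P" "q 0 = \<Phi> (p 0)" "q 1 = \<Phi> (p 1)"
    using path_contains_arc[of "\<Phi> \<circ> p" "\<Phi> (p 0)" "\<Phi> (p 1)"]
    by (auto simp: pathstart_def pathfinish_def path_image_def P_def image_comp)
  define \<psi> where "\<psi> = inv_into P \<Phi>"
  have P_top: "topspace (subtopology T P) = P" using compactin_subset_topspace[OF P] by auto
  have "continuous_map (subtopology euclidean (path_image q)) (subtopology T P) \<psi>"
    unfolding \<psi>_def
  proof (rule continuous_inverse_map[OF compact_space_subtopology[OF P] Hausdorff_space_euclidean])
    show "continuous_map (subtopology T P) euclidean \<Phi>" using continuous_map_from_subtopology[OF \<Phi>] .
    show "\<And>x. x \<in> topspace (subtopology T P) \<Longrightarrow> inv_into P \<Phi> (\<Phi> x) = x"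
      using inj P_top by (auto simp: P_def intro: inv_into_f_f)
    show "path_image q \<subseteq> \<Phi> ` topspace (subtopology T P)" using q(2) P_top by simp
  qed
  moreover have "continuous_map (subtopology euclideanreal {0..1}) (subtopology euclidean (path_image q)) q"
    using q(1) by (auto simp: arc_def path_def path_image_def intro: continuous_map_into_subtopology)
  ultimately have "continuous_map (subtopology euclideanreal {0..1}) (subtopology T P) (\<psi> \<circ> q)"
    by (rule continuous_map_compose[rotated])
  then have "pathin T (\<psi> \<circ> q)" unfolding pathin_def using continuous_map_in_subtopology by blast
  moreover have "inj_on (\<psi> \<circ> q) {0..1}"
  proof (rule comp_inj_on)
    show "inj_on q {0..1}" using q(1) by (simp add: arc_def)
    show "inj_on \<psi> (q ` {0..1})"
      unfolding \<psi>_def using inj_on_inv_into q(2) by (metis path_image_def)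
  qed
  moreover have "(\<psi> \<circ> q) 0 = p 0" "(\<psi> \<circ> q) 1 = p 1"
    using q(3,4) inj by (auto simp: \<psi>_def P_def intro: inv_into_f_f)
  ultimately show thesis using that by blast
qed

definition hat_function :: "nat \<Rightarrow> (real \<Rightarrow>\<^sub>C real)" where
  "hat_function n = Bcontfun (\<lambda>x. max 0 (1 - \<bar>x - real n\<bar>))"

lemma hat_function_at_nat: "apply_bcontfun (hat_function n) (real m) = (if m = n then 1 else 0)"
proof -
  have "(\<lambda>x::real. max 0 (1 - \<bar>x - real n\<bar>)) \<in> bcontfun"
    by (rule bcontfun_normI[where b = 1]) (auto intro!: continuous_intros)
  then have "apply_bcontfun (hat_function n) (real m) = max 0 (1 - \<bar>real m - real n\<bar>)"
    unfolding hat_function_def by (simp add: Bcontfun_inverse)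
  moreover have "m \<noteq> n \<Longrightarrow> 1 \<le> \<bar>real m - real n\<bar>" by linarith
  ultimately show ?thesis by auto
qed

lemma hat_combination_eq_iff:
  "(\<Sum>k<n. c k *\<^sub>R hat_function k) = (\<Sum>k<n. d k *\<^sub>R hat_function k) \<longleftrightarrow> (\<forall>k<n. c k = d k)"
proof -
  have eval: "apply_bcontfun (\<Sum>k<n. c k *\<^sub>R hat_function k) (real m) = (if m < n then c m else 0)"
    for c :: "nat \<Rightarrow> real" and m
  proof -
    have "apply_bcontfun (\<Sum>k<n. c k *\<^sub>R hat_function k) (real m)
        = (\<Sum>k<n. c k * apply_bcontfun (hat_function k) (real m))"
      by (induction n) auto
    then show ?thesis by (simp add: hat_function_at_nat if_distrib sum.delta' cong: if_cong)
  qed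
  show ?thesis
  proof
    assume "(\<Sum>k<n. c k *\<^sub>R hat_function k) = (\<Sum>k<n. d k *\<^sub>R hat_function k)"
    then show "\<forall>k<n. c k = d k" using eval[of c] eval[of d] by metis
  qed simp
qed

section \<open>Merge trees\<close>

lemma merge_rel_sym: "merge_rel X f x y \<Longrightarrow> merge_rel X f y x"
  by (auto simp: merge_rel_def intro: connected_component_sym)

lemma merge_rel_trans: "merge_rel X f x y \<Longrightarrow> merge_rel X f y z \<Longrightarrow> merge_rel X f x z"
  by (auto simp: merge_rel_def intro: connected_component_trans)

lemma merge_class_self: "x \<in> X \<Longrightarrow> x \<in> merge_class X f x"
  by (simp add: merge_class_def merge_rel_def)

lemma merge_class_eq_iff:
  assumes "x \<in> X" "y \<in> X"
  shows "merge_class X f x = merge_class X f y \<longleftrightarrow> merge_rel X f x y"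
proof
  assume "merge_class X f x = merge_class X f y"
  then show "merge_rel X f x y" using merge_class_self[OF assms(2)] by (auto simp: merge_class_def)
next
  assume "merge_rel X f x y"
  then show "merge_class X f x = merge_class X f y"
    unfolding merge_class_def using merge_rel_sym merge_rel_trans by blast
qed

lemma mem_merge_class:
  assumes "z \<in> merge_class X f x"
  shows "z \<in> X" "merge_class X f z = merge_class X f x" "f z = f x"
proof -
  have m: "merge_rel X f x z" using assms by (simp add: merge_class_def)
  then show z: "z \<in> X" "f z = f x" by (auto simp: merge_rel_def)
  have "x \<in> X" using m by (simp add: merge_rel_def)
  then show "merge_class X f z = merge_class X f x"
    using m merge_rel_sym merge_class_eq_iff[OF z(1)] by blast
qed

lemma merge_fun_merge_class: "x \<in> X \<Longrightarrow> merge_fun f (merge_class X f x) = f x"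
  unfolding merge_fun_def using merge_class_self mem_merge_class(3) by (metis someI)

lemma openin_merge_tree:
  "openin (merge_tree X f) U \<longleftrightarrow>
     U \<subseteq> merge_class X f ` X \<and> openin (top_of_set X) {x \<in> X. merge_class X f x \<in> U}"
proof -
  let ?\<pi> = "merge_class X f"
  have inter: "S \<inter> T \<subseteq> ?\<pi> ` X \<and> openin (top_of_set X) {x \<in> X. ?\<pi> x \<in> S \<inter> T}"
    if S: "S \<subseteq> ?\<pi> ` X" "openin (top_of_set X) {x \<in> X. ?\<pi> x \<in> S}"
      and T: "T \<subseteq> ?\<pi> ` X" "openin (top_of_set X) {x \<in> X. ?\<pi> x \<in> T}" for S T
  proof -
    have "openin (top_of_set X) ({x \<in> X. ?\<pi> x \<in> S} \<inter> {x \<in> X. ?\<pi> x \<in> T})"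
      using S T by (intro openin_Int)
    moreover have "{x \<in> X. ?\<pi> x \<in> S \<inter> T} = {x \<in> X. ?\<pi> x \<in> S} \<inter> {x \<in> X. ?\<pi> x \<in> T}" by blast
    ultimately show ?thesis using S T by auto
  qed
  have union: "\<Union>\<U> \<subseteq> ?\<pi> ` X \<and> openin (top_of_set X) {x \<in> X. ?\<pi> x \<in> \<Union>\<U>}"
    if \<U>: "\<forall>S\<in>\<U>. S \<subseteq> ?\<pi> ` X \<and> openin (top_of_set X) {x \<in> X. ?\<pi> x \<in> S}" for \<U>
  proof -
    have "openin (top_of_set X) (\<Union>S\<in>\<U>. {x \<in> X. ?\<pi> x \<in> S})" using \<U> by (intro openin_Union) auto
    moreover have "{x \<in> X. ?\<pi> x \<in> \<Union>\<U>} = (\<Union>S\<in>\<U>. {x \<in> X. ?\<pi> x \<in> S})" by blast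
    ultimately show ?thesis using \<U> by auto
  qed
  have "istopology (\<lambda>U. U \<subseteq> ?\<pi> ` X \<and> openin (top_of_set X) {x \<in> X. ?\<pi> x \<in> U})"
    unfolding istopology_def using inter union by blast
  then show ?thesis unfolding merge_tree_def by (simp add: topology_inverse')
qed

lemma topspace_merge_tree: "topspace (merge_tree X f) = merge_class X f ` X"
proof -
  have "{x \<in> X. merge_class X f x \<in> merge_class X f ` X} = X" by auto
  then have "openin (merge_tree X f) (merge_class X f ` X)" unfolding openin_merge_tree by auto
  then show ?thesis
    using openin_subset openin_merge_tree[of X f "topspace (merge_tree X f)"] by blast
qed

lemma closedin_merge_treeI:
  assumes "A \<subseteq> merge_class X f ` X" "closedin (top_of_set X) {x \<in> X. merge_class X f x \<in> A}"
  shows "closedin (merge_tree X f) A"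
proof -
  have "{x \<in> X. merge_class X f x \<in> merge_class X f ` X - A} = X - {x \<in> X. merge_class X f x \<in> A}"
    by auto
  then have "openin (merge_tree X f) (merge_class X f ` X - A)"
    using assms(2) unfolding openin_merge_tree by (auto simp: openin_diff closedin_def)
  then show ?thesis using assms(1) by (simp add: closedin_def topspace_merge_tree)
qed

lemma continuous_map_merge_class: "continuous_map (top_of_set X) (merge_tree X f) (merge_class X f)"
  unfolding continuous_map_def topspace_merge_tree by (auto simp: openin_merge_tree)

lemma continuous_map_from_merge_tree:
  assumes cont: "continuous_on X h"
    and const: "\<And>x y. x \<in> X \<Longrightarrow> y \<in> X \<Longrightarrow> merge_class X f x = merge_class X f y \<Longrightarrow> h x = h y"
  shows "continuous_map (merge_tree X f) euclidean (\<lambda>c. h (SOME x. x \<in> c))"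
  unfolding continuous_map_def
proof (intro conjI allI impI)
  show "(\<lambda>c. h (SOME x. x \<in> c)) \<in> topspace (merge_tree X f) \<rightarrow> topspace euclidean" by simp
  fix U :: "'b set" assume U: "openin euclidean U"
  let ?\<pi> = "merge_class X f"
  have rep: "h (SOME z. z \<in> ?\<pi> x) = h x" if "x \<in> X" for x
  proof -
    have "(SOME z. z \<in> ?\<pi> x) \<in> ?\<pi> x" using merge_class_self[OF that] by (rule someI)
    then show ?thesis using mem_merge_class const that by metis
  qed
  have "{x \<in> X. ?\<pi> x \<in> {c \<in> topspace (merge_tree X f). h (SOME x. x \<in> c) \<in> U}} = {x \<in> X. h x \<in> U}"
    using rep by (auto simp: topspace_merge_tree)
  moreover have "openin (top_of_set X) {x \<in> X. h x \<in> U}"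
    using openin_continuous_map_preimage[of "top_of_set X" euclidean h U] cont U by simp
  ultimately show "openin (merge_tree X f) {c \<in> topspace (merge_tree X f). h (SOME x. x \<in> c) \<in> U}"
    unfolding openin_merge_tree by (auto simp: topspace_merge_tree)
qed

lemma continuous_map_merge_fun:
  assumes "continuous_on X f"
  shows "continuous_map (merge_tree X f) euclidean (merge_fun f)"
  using continuous_map_from_merge_tree[OF assms, of f]
  by (simp add: merge_fun_def[abs_def] merge_class_eq_iff merge_rel_def)

lemma pathin_merge_tree_cases:
  assumes "pathin (merge_tree X f) \<gamma>" "t \<in> {0..1}"
  obtains x where "x \<in> X" "\<gamma> t = merge_class X f x"
proof -
  have "\<gamma> t \<in> merge_class X f ` X"
    using assms unfolding pathin_def continuous_map_def topspace_merge_tree by (auto simp: Pi_iff)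
  then show thesis using that by blast
qed

lemma connectedin_pathin_image:
  assumes "pathin T \<gamma>" "{a..b} \<subseteq> {0..1}"
  shows "connectedin T (\<gamma> ` {a..b})"
proof -
  have "connectedin (subtopology euclideanreal {0..1}) {a..b}"
    using assms(2) by (simp add: connectedin_subtopology)
  then show ?thesis using connectedin_continuous_map_image assms(1) unfolding pathin_def by blast
qed

section \<open>Piecewise linear functions on a geometric simplicial complex\<close>

lemma piecewise_linear_diff:
  assumes "piecewise_linear K pos f" "piecewise_linear K pos g"
  shows "piecewise_linear K pos (\<lambda>x. f x - g x)"
  using assms unfolding piecewise_linear_def by (simp add: sum_subtractf right_diff_distrib)

locale geom_complex =
  fixes K :: "'v set set" and pos :: "'v \<Rightarrow> 'a::euclidean_space"
  assumes complex: "geom_simplicial_complex K pos"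
begin

abbreviation X where "X \<equiv> realization K pos"

definition gsimplex :: "'v set \<Rightarrow> 'a set" where "gsimplex \<sigma> = convex hull (pos ` \<sigma>)"

lemma finite_complex: "finite K"
  and simplex_nonempty: "\<sigma> \<in> K \<Longrightarrow> \<sigma> \<noteq> {}"
  and finite_simplex: "\<sigma> \<in> K \<Longrightarrow> finite \<sigma>"
  and face_in_complex: "\<sigma> \<in> K \<Longrightarrow> \<tau> \<subseteq> \<sigma> \<Longrightarrow> \<tau> \<noteq> {} \<Longrightarrow> \<tau> \<in> K"
  and inj_on_simplex: "\<sigma> \<in> K \<Longrightarrow> inj_on pos \<sigma>"
  and affine_independent_simplex: "\<sigma> \<in> K \<Longrightarrow> \<not> affine_dependent (pos ` \<sigma>)"
  and gsimplex_Int: "\<sigma> \<in> K \<Longrightarrow> \<tau> \<in> K \<Longrightarrow> gsimplex \<sigma> \<inter> gsimplex \<tau> = gsimplex (\<sigma> \<inter> \<tau>)"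
  using complex unfolding geom_simplicial_complex_def gsimplex_def by blast+

lemma realization_eq: "X = (\<Union>\<sigma>\<in>K. gsimplex \<sigma>)"
  by (simp add: realization_def gsimplex_def)

lemma gsimplex_subset_realization: "\<sigma> \<in> K \<Longrightarrow> gsimplex \<sigma> \<subseteq> X"
  and realization_cases: "x \<in> X \<Longrightarrow> \<exists>\<sigma>\<in>K. x \<in> gsimplex \<sigma>"
  using realization_eq by auto

lemma closed_gsimplex: "\<sigma> \<in> K \<Longrightarrow> closed (gsimplex \<sigma>)"
  unfolding gsimplex_def by (simp add: finite_simplex compact_imp_closed finite_imp_compact_convex_hull)

lemma convex_gsimplex: "convex (gsimplex \<sigma>)"
  unfolding gsimplex_def by simp

lemma vertex_in_gsimplex: "v \<in> \<sigma> \<Longrightarrow> pos v \<in> gsimplex \<sigma>"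
  unfolding gsimplex_def by (simp add: hull_inc)

lemma in_vertices: "\<sigma> \<in> K \<Longrightarrow> u \<in> \<sigma> \<Longrightarrow> u \<in> vertices K"
  by (auto simp: vertices_def)

lemma finite_vertices: "finite (vertices K)"
  unfolding vertices_def using finite_complex finite_simplex by blast

lemma singleton_in_complex: "v \<in> vertices K \<Longrightarrow> {v} \<in> K"
  unfolding vertices_def using face_in_complex by blast

lemma vertex_in_realization: "v \<in> vertices K \<Longrightarrow> pos v \<in> X"
  using singleton_in_complex vertex_in_gsimplex gsimplex_subset_realization by blast

lemma gsimplex_barycentric:
  assumes "\<sigma> \<in> K" "x \<in> gsimplex \<sigma>"
  obtains l where "\<forall>v\<in>\<sigma>. 0 \<le> l v" "sum l \<sigma> = 1" "x = (\<Sum>v\<in>\<sigma>. l v *\<^sub>R pos v)"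
proof -
  obtain u where u: "\<forall>y\<in>pos ` \<sigma>. 0 \<le> u y" "sum u (pos ` \<sigma>) = 1" "(\<Sum>y\<in>pos ` \<sigma>. u y *\<^sub>R y) = x"
    using assms(2) convex_hull_finite[OF finite_imageI[OF finite_simplex[OF assms(1)], of pos]]
    unfolding gsimplex_def by blast
  have inj: "inj_on pos \<sigma>" using inj_on_simplex[OF assms(1)] .
  show thesis
  proof (rule that[of "u \<circ> pos"])
    show "\<forall>v\<in>\<sigma>. 0 \<le> (u \<circ> pos) v" using u(1) by simp
    show "sum (u \<circ> pos) \<sigma> = 1" using u(2) inj by (simp add: sum.reindex)
    show "x = (\<Sum>v\<in>\<sigma>. (u \<circ> pos) v *\<^sub>R pos v)"
      using u(3) inj sum.reindex[of pos \<sigma> "\<lambda>y. u y *\<^sub>R y"] by simp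
  qed
qed

context
  fixes h :: "'a \<Rightarrow> real"
  assumes pl_h: "piecewise_linear K pos h"
begin

lemma pl_barycentric:
  assumes "\<sigma> \<in> K" "\<forall>v\<in>\<sigma>. 0 \<le> l v" "sum l \<sigma> = 1"
  shows "h (\<Sum>v\<in>\<sigma>. l v *\<^sub>R pos v) = (\<Sum>v\<in>\<sigma>. l v * h (pos v))"
  using pl_h assms unfolding piecewise_linear_def by blast

lemma pl_exists_vertex_le:
  assumes "\<sigma> \<in> K" "x \<in> gsimplex \<sigma>"
  shows "\<exists>u\<in>\<sigma>. h (pos u) \<le> h x"
proof -
  obtain l where l: "\<forall>v\<in>\<sigma>. 0 \<le> l v" "sum l \<sigma> = 1" "x = (\<Sum>v\<in>\<sigma>. l v *\<^sub>R pos v)"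
    using gsimplex_barycentric[OF assms] .
  show ?thesis
    using exists_le_convex_combination[OF finite_simplex[OF assms(1)] l(1,2), of "\<lambda>v. h (pos v)"]
      pl_barycentric[OF assms(1) l(1,2)] l(3) by simp
qed

lemma pl_exists_vertex_ge:
  assumes "\<sigma> \<in> K" "x \<in> gsimplex \<sigma>"
  shows "\<exists>u\<in>\<sigma>. h x \<le> h (pos u)"
proof -
  obtain l where l: "\<forall>v\<in>\<sigma>. 0 \<le> l v" "sum l \<sigma> = 1" "x = (\<Sum>v\<in>\<sigma>. l v *\<^sub>R pos v)"
    using gsimplex_barycentric[OF assms] .
  show ?thesis
    using exists_le_convex_combination[OF finite_simplex[OF assms(1)] l(1,2), of "\<lambda>v. - h (pos v)"]
      pl_barycentric[OF assms(1) l(1,2)] l(3) by (simp add: sum_negf)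
qed

lemma pl_abs_le_vertex:
  assumes "x \<in> X"
  shows "\<exists>v\<in>vertices K. \<bar>h x\<bar> \<le> \<bar>h (pos v)\<bar>"
proof -
  obtain \<sigma> where \<sigma>: "\<sigma> \<in> K" "x \<in> gsimplex \<sigma>" using realization_cases[OF assms] by blast
  obtain u w where "u \<in> \<sigma>" "h (pos u) \<le> h x" "w \<in> \<sigma>" "h x \<le> h (pos w)"
    using pl_exists_vertex_le[OF \<sigma>] pl_exists_vertex_ge[OF \<sigma>] by blast
  then show ?thesis using in_vertices[OF \<sigma>(1)] by (cases "0 \<le> h x") force+
qed

end

end

locale pl_function = geom_complex K pos
  for K :: "'v set set" and pos :: "'v \<Rightarrow> 'a::euclidean_space" +
  fixes f :: "'a \<Rightarrow> real"
  assumes pl: "piecewise_linear K pos f"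
begin

lemmas exists_vertex_le = pl_exists_vertex_le[OF pl]
   and exists_vertex_ge = pl_exists_vertex_ge[OF pl]

lemma affine_extension_on_gsimplex:
  assumes "\<sigma> \<in> K"
  shows "\<exists>A. continuous_on UNIV A \<and> (\<forall>x\<in>gsimplex \<sigma>. f x = A x) \<and>
           (\<forall>x y t. A ((1 - t) *\<^sub>R x + t *\<^sub>R y) = (1 - t) * A x + t * A y)"
proof -
  obtain v0 where v0: "v0 \<in> \<sigma>" using simplex_nonempty[OF assms] by auto
  obtain L where L: "linear L" "\<forall>y\<in>pos ` \<sigma>. L (y - pos v0) = f y - f (pos v0)"
    by (rule affine_independent_linear_extension[OF affine_independent_simplex[OF assms] imageI[OF v0]])
  define A where "A x = f (pos v0) + L (x - pos v0)" for x
  have "continuous_on UNIV L"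
    using L(1) by (simp add: linear_continuous_on linear_conv_bounded_linear)
  then have "continuous_on UNIV (\<lambda>x. L (x - pos v0))"
    by (rule continuous_on_compose2) (auto intro: continuous_intros)
  then have cont: "continuous_on UNIV A" unfolding A_def by (intro continuous_intros)
  have aff: "A ((1 - t) *\<^sub>R x + t *\<^sub>R y) = (1 - t) * A x + t * A y" for x y t
  proof -
    have "(1 - t) *\<^sub>R x + t *\<^sub>R y - pos v0 = (1 - t) *\<^sub>R (x - pos v0) + t *\<^sub>R (y - pos v0)"
      by (simp add: algebra_simps)
    then have "L ((1 - t) *\<^sub>R x + t *\<^sub>R y - pos v0) = (1 - t) * L (x - pos v0) + t * L (y - pos v0)"
      using L(1) by (simp add: linear_add linear_scale)
    then show ?thesis unfolding A_def by (simp add: algebra_simps)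
  qed
  have "f x = A x" if x: "x \<in> gsimplex \<sigma>" for x
  proof -
    obtain l where l: "\<forall>v\<in>\<sigma>. 0 \<le> l v" "sum l \<sigma> = 1" "x = (\<Sum>v\<in>\<sigma>. l v *\<^sub>R pos v)"
      using gsimplex_barycentric[OF assms x] .
    have "pos v0 = (\<Sum>v\<in>\<sigma>. l v *\<^sub>R pos v0)" by (metis l(2) scaleR_one scaleR_sum_left)
    then have "x - pos v0 = (\<Sum>v\<in>\<sigma>. l v *\<^sub>R (pos v - pos v0))"
      using l(3) by (simp add: scaleR_diff_right sum_subtractf)
    then have "L (x - pos v0) = (\<Sum>v\<in>\<sigma>. l v * (f (pos v) - f (pos v0)))"
      using L by (simp add: linear_sum linear_scale)
    also have "\<dots> = (\<Sum>v\<in>\<sigma>. l v * f (pos v)) - f (pos v0)"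
      using l(2) by (simp add: right_diff_distrib sum_subtractf sum_distrib_right[symmetric])
    finally show ?thesis
      using pl_barycentric[OF pl assms l(1,2)] l(3) by (simp add: A_def)
  qed
  then show ?thesis using cont aff by blast
qed

lemma continuous_on_gsimplex:
  assumes "\<sigma> \<in> K"
  shows "continuous_on (gsimplex \<sigma>) f"
proof -
  obtain A where A: "continuous_on UNIV A" "\<forall>x\<in>gsimplex \<sigma>. f x = A x"
    using affine_extension_on_gsimplex[OF assms] by blast
  show ?thesis
    by (rule continuous_on_eq[OF continuous_on_subset[OF A(1)]]) (use A(2) in auto)
qed

lemma continuous_on_realization: "continuous_on X f"
  unfolding realization_eq
  by (rule continuous_on_closed_Union) (auto simp: finite_complex closed_gsimplex continuous_on_gsimplex)

lemma affine_on_gsimplex: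
  assumes "\<sigma> \<in> K" "x \<in> gsimplex \<sigma>" "y \<in> gsimplex \<sigma>" "0 \<le> t" "t \<le> 1"
  shows "f ((1 - t) *\<^sub>R x + t *\<^sub>R y) = (1 - t) * f x + t * f y"
proof -
  obtain A where A: "\<forall>x\<in>gsimplex \<sigma>. f x = A x"
      "\<forall>x y t. A ((1 - t) *\<^sub>R x + t *\<^sub>R y) = (1 - t) * A x + t * A y"
    using affine_extension_on_gsimplex[OF assms(1)] by blast
  have "(1 - t) *\<^sub>R x + t *\<^sub>R y \<in> gsimplex \<sigma>"
    using convex_gsimplex[of \<sigma>] assms(2-5) unfolding convex_alt by blast
  then show ?thesis using A assms(2,3) by simp
qed

section \<open>Sublevel sets and the 1-skeleton\<close>

definition vertex_values :: "real set" where "vertex_values = (\<lambda>w. f (pos w)) ` vertices K"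

lemma finite_vertex_values: "finite vertex_values"
  by (simp add: vertex_values_def finite_vertices)

definition sublevel :: "real \<Rightarrow> 'a set" where "sublevel r = {x \<in> X. f x \<le> r}"

definition sublevel_edges :: "real \<Rightarrow> ('v \<times> 'v) set" where
  "sublevel_edges r = {(u, w). f (pos u) \<le> r \<and> f (pos w) \<le> r \<and> (\<exists>\<sigma>\<in>K. u \<in> \<sigma> \<and> w \<in> \<sigma>)}"

lemma sublevel_mono: "r1 \<le> r2 \<Longrightarrow> sublevel r1 \<subseteq> sublevel r2"
  by (auto simp: sublevel_def)

lemma sublevel_component_mono:
  "r1 \<le> r2 \<Longrightarrow> connected_component (sublevel r1) x y \<Longrightarrow> connected_component (sublevel r2) x y"
  using sublevel_mono connected_component_of_subset by blast

lemma sublevel_componentD: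
  assumes "connected_component (sublevel r) x y"
  shows "x \<in> X" "f x \<le> r" "y \<in> X" "f y \<le> r"
  using connected_component_in[OF assms] by (auto simp: sublevel_def)

lemma sublevel_component_in_gsimplex:
  assumes "\<sigma> \<in> K" "x \<in> gsimplex \<sigma>" "y \<in> gsimplex \<sigma>" "f x \<le> r" "f y \<le> r"
  shows "connected_component (sublevel r) x y"
proof (rule connected_componentI[of "closed_segment x y"])
  show "closed_segment x y \<subseteq> sublevel r"
  proof
    fix z assume z: "z \<in> closed_segment x y"
    then obtain t where t: "0 \<le> t" "t \<le> 1" "z = (1 - t) *\<^sub>R x + t *\<^sub>R y"
      unfolding closed_segment_def by blast
    have "f z = (1 - t) * f x + t * f y" using affine_on_gsimplex[OF assms(1-3) t(1,2)] t(3) by simp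
    also have "\<dots> \<le> (1 - t) * r + t * r"
      using t assms(4,5) by (intro add_mono mult_left_mono) auto
    finally have "f z \<le> r" by (simp add: algebra_simps)
    moreover have "z \<in> gsimplex \<sigma>"
      using closed_segment_subset[OF assms(2,3) convex_gsimplex] z by blast
    ultimately show "z \<in> sublevel r"
      using gsimplex_subset_realization[OF assms(1)] by (auto simp: sublevel_def)
  qed
qed auto

lemma sublevel_component_of_edges:
  assumes "(u, w) \<in> (sublevel_edges r)\<^sup>*" "u \<in> vertices K" "f (pos u) \<le> r"
  shows "connected_component (sublevel r) (pos u) (pos w)"
  using assms(1)
proof (induction rule: rtrancl_induct)
  case base
  then show ?case using vertex_in_realization[OF assms(2)] assms(3) by (simp add: sublevel_def)
next
  case (step y z)
  then have "connected_component (sublevel r) (pos y) (pos z)"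
    using sublevel_component_in_gsimplex vertex_in_gsimplex by (fastforce simp: sublevel_edges_def)
  then show ?case using step.IH connected_component_trans by blast
qed

definition edge_reach :: "real \<Rightarrow> 'v \<Rightarrow> 'v set" where
  "edge_reach r u = {w. (u, w) \<in> (sublevel_edges r)\<^sup>*}"

lemma edge_reach_le:
  assumes "w \<in> edge_reach r u" "f (pos u) \<le> r"
  shows "f (pos w) \<le> r"
proof -
  have "(u, w) \<in> (sublevel_edges r)\<^sup>*" using assms(1) by (simp add: edge_reach_def)
  then show ?thesis using assms(2) by (induction rule: rtrancl_induct) (auto simp: sublevel_edges_def)
qed

definition reached_part :: "real \<Rightarrow> 'v \<Rightarrow> 'a set" where
  "reached_part r u = (\<Union>\<sigma>\<in>{\<sigma>\<in>K. \<sigma> \<inter> edge_reach r u \<noteq> {}}. gsimplex \<sigma> \<inter> sublevel r)"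

definition unreached_part :: "real \<Rightarrow> 'v \<Rightarrow> 'a set" where
  "unreached_part r u = (\<Union>\<sigma>\<in>{\<sigma>\<in>K. \<sigma> \<inter> edge_reach r u = {}}. gsimplex \<sigma> \<inter> sublevel r)"

lemma closed_gsimplex_Int_sublevel: "\<sigma> \<in> K \<Longrightarrow> closed (gsimplex \<sigma> \<inter> sublevel r)"
proof -
  assume \<sigma>: "\<sigma> \<in> K"
  have "gsimplex \<sigma> \<inter> sublevel r = {x \<in> gsimplex \<sigma>. f x \<le> r}"
    using gsimplex_subset_realization[OF \<sigma>] by (auto simp: sublevel_def)
  then show ?thesis
    by (simp add: continuous_on_closed_Collect_le continuous_on_gsimplex[OF \<sigma>] closed_gsimplex[OF \<sigma>])
qed

lemma closed_reached_part: "closed (reached_part r u)"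
  unfolding reached_part_def
  by (rule closed_UN) (auto simp: finite_complex closed_gsimplex_Int_sublevel)

lemma closed_unreached_part: "closed (unreached_part r u)"
  unfolding unreached_part_def
  by (rule closed_UN) (auto simp: finite_complex closed_gsimplex_Int_sublevel)

lemma sublevel_subset_parts: "sublevel r \<subseteq> reached_part r u \<union> unreached_part r u"
proof
  fix x assume x: "x \<in> sublevel r"
  then obtain \<sigma> where "\<sigma> \<in> K" "x \<in> gsimplex \<sigma>" using realization_cases by (auto simp: sublevel_def)
  then show "x \<in> reached_part r u \<union> unreached_part r u"
    using x by (cases "\<sigma> \<inter> edge_reach r u = {}") (auto simp: reached_part_def unreached_part_def)
qed

lemma exists_common_vertex_le:
  assumes "\<sigma> \<in> K" "\<tau> \<in> K" "x \<in> gsimplex \<sigma>" "x \<in> gsimplex \<tau>"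
  shows "\<exists>u\<in>\<sigma> \<inter> \<tau>. f (pos u) \<le> f x"
proof -
  have x: "x \<in> gsimplex (\<sigma> \<inter> \<tau>)" using gsimplex_Int[OF assms(1,2)] assms(3,4) by auto
  then have "\<sigma> \<inter> \<tau> \<noteq> {}" unfolding gsimplex_def by auto
  then show ?thesis using exists_vertex_le[OF face_in_complex[OF assms(1)] x] by blast
qed

lemma reached_part_disjoint:
  assumes "f (pos u) \<le> r"
  shows "reached_part r u \<inter> unreached_part r u = {}"
proof (rule ccontr)
  assume "reached_part r u \<inter> unreached_part r u \<noteq> {}"
  then obtain z \<sigma>1 \<sigma>2 w1 where z: "\<sigma>1 \<in> K" "\<sigma>2 \<in> K" "\<sigma>2 \<inter> edge_reach r u = {}"
      "z \<in> gsimplex \<sigma>1" "z \<in> gsimplex \<sigma>2" "z \<in> sublevel r" "w1 \<in> \<sigma>1" "w1 \<in> edge_reach r u"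
    unfolding reached_part_def unreached_part_def by blast
  obtain w where w: "w \<in> \<sigma>1 \<inter> \<sigma>2" "f (pos w) \<le> f z"
    using exists_common_vertex_le[OF z(1,2,4,5)] by blast
  have "(w1, w) \<in> sublevel_edges r"
    using w z edge_reach_le[OF z(8) assms] by (auto simp: sublevel_edges_def sublevel_def)
  then have "w \<in> edge_reach r u" using z(8) by (auto simp: edge_reach_def)
  then show False using z(3) w by auto
qed

text \<open>For the converse, the parts of the sublevel set in simplices touched, respectively not
  touched, by the vertices edge-reachable from u are disjoint closed sets covering it.\<close>
lemma sublevel_component_iff_edge_path:
  assumes "\<sigma> \<in> K" "\<tau> \<in> K" "x \<in> gsimplex \<sigma>" "y \<in> gsimplex \<tau>" "u \<in> \<sigma>" "w \<in> \<tau>"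
    "f (pos u) \<le> r" "f (pos w) \<le> r" "f x \<le> r" "f y \<le> r"
  shows "connected_component (sublevel r) x y \<longleftrightarrow> (u, w) \<in> (sublevel_edges r)\<^sup>*"
proof
  assume "(u, w) \<in> (sublevel_edges r)\<^sup>*"
  then have "connected_component (sublevel r) (pos u) (pos w)"
    using sublevel_component_of_edges in_vertices assms by blast
  moreover have "connected_component (sublevel r) x (pos u)" "connected_component (sublevel r) (pos w) y"
    using sublevel_component_in_gsimplex assms vertex_in_gsimplex by blast+
  ultimately show "connected_component (sublevel r) x y" using connected_component_trans by blast
next
  assume xy: "connected_component (sublevel r) x y"
  let ?C = "connected_component_set (sublevel r) x"
  have x: "x \<in> reached_part r u" using assms(1,3,5,9) gsimplex_subset_realization[OF assms(1)]
    by (auto simp: reached_part_def edge_reach_def sublevel_def)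
  have "?C \<subseteq> reached_part r u"
  proof (rule ccontr)
    assume not_sub: "\<not> ?C \<subseteq> reached_part r u"
    have "connected ?C" by simp
    moreover have cover: "?C \<subseteq> reached_part r u \<union> unreached_part r u"
      using sublevel_subset_parts connected_component_subset by blast
    moreover have "reached_part r u \<inter> unreached_part r u \<inter> ?C = {}"
      using reached_part_disjoint[OF assms(7)] by blast
    moreover have "reached_part r u \<inter> ?C \<noteq> {}"
      using x xy connected_component_in connected_component_refl by blast
    moreover have "unreached_part r u \<inter> ?C \<noteq> {}" using not_sub cover by blast
    ultimately show False using closed_reached_part closed_unreached_part connected_closed by blast
  qed
  then have "y \<in> reached_part r u" using xy by blast
  then obtain \<sigma>2 w2 where \<sigma>2: "\<sigma>2 \<in> K" "w2 \<in> \<sigma>2" "w2 \<in> edge_reach r u" "y \<in> gsimplex \<sigma>2"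
    by (auto simp: reached_part_def)
  obtain w' where w': "w' \<in> \<sigma>2 \<inter> \<tau>" "f (pos w') \<le> f y"
    using exists_common_vertex_le[OF \<sigma>2(1) assms(2) \<sigma>2(4) assms(4)] by blast
  have "(w2, w') \<in> sublevel_edges r"
    using \<sigma>2 w' edge_reach_le[OF \<sigma>2(3) assms(7)] assms(10) by (auto simp: sublevel_edges_def)
  moreover have "(w', w) \<in> sublevel_edges r"
    using w' assms(2,6,8,10) by (auto simp: sublevel_edges_def)
  ultimately show "(u, w) \<in> (sublevel_edges r)\<^sup>*" using \<sigma>2(3) by (auto simp: edge_reach_def)
qed

lemma vertex_component_eq_reached_part:
  assumes "u \<in> vertices K" "f (pos u) \<le> r"
  shows "connected_component_set (sublevel r) (pos u) = reached_part r u"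
proof (intro set_eqI iffI)
  fix z assume z: "z \<in> connected_component_set (sublevel r) (pos u)"
  then have zr: "z \<in> sublevel r" using connected_component_in by blast
  then obtain \<sigma> where \<sigma>: "\<sigma> \<in> K" "z \<in> gsimplex \<sigma>" using realization_cases by (auto simp: sublevel_def)
  obtain w where w: "w \<in> \<sigma>" "f (pos w) \<le> f z" using exists_vertex_le[OF \<sigma>] by blast
  have "(u, w) \<in> (sublevel_edges r)\<^sup>*"
    using sublevel_component_iff_edge_path[OF singleton_in_complex[OF assms(1)] \<sigma>(1)
        vertex_in_gsimplex[of u "{u}"] \<sigma>(2) _ w(1)] assms(2) w(2) zr z
    by (auto simp: sublevel_def)
  then show "z \<in> reached_part r u" using \<sigma> w zr by (auto simp: reached_part_def edge_reach_def)
next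
  fix z assume "z \<in> reached_part r u"
  then obtain \<sigma> w where \<sigma>: "\<sigma> \<in> K" "z \<in> gsimplex \<sigma>" "z \<in> sublevel r" "w \<in> \<sigma>" "w \<in> edge_reach r u"
    by (auto simp: reached_part_def)
  have "connected_component (sublevel r) (pos u) z"
    using sublevel_component_iff_edge_path[OF singleton_in_complex[OF assms(1)] \<sigma>(1)
        vertex_in_gsimplex[of u "{u}"] \<sigma>(2) _ \<sigma>(4)] assms(2) \<sigma>(3,5) edge_reach_le[OF \<sigma>(5) assms(2)]
    by (auto simp: sublevel_def edge_reach_def)
  then show "z \<in> connected_component_set (sublevel r) (pos u)" by simp
qed

lemma closed_vertex_component:
  assumes "u \<in> vertices K" "f (pos u) \<le> r"
  shows "closed (connected_component_set (sublevel r) (pos u))"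
    and "closed (sublevel r - connected_component_set (sublevel r) (pos u))"
proof -
  have "unreached_part r u \<subseteq> sublevel r" by (auto simp: unreached_part_def)
  then have "sublevel r - reached_part r u = unreached_part r u"
    using sublevel_subset_parts[of r u] reached_part_disjoint[OF assms(2)] by blast
  then show "closed (connected_component_set (sublevel r) (pos u))"
    and "closed (sublevel r - connected_component_set (sublevel r) (pos u))"
    using vertex_component_eq_reached_part[OF assms] closed_reached_part closed_unreached_part by auto
qed

lemma sublevel_component_stable:
  assumes "r1 \<le> r2" "\<forall>w\<in>vertices K. f (pos w) \<le> r2 \<longrightarrow> f (pos w) \<le> r1"
    "u \<in> vertices K" "f (pos u) \<le> r1" "x \<in> sublevel r1"
    "connected_component (sublevel r2) (pos u) x"
  shows "connected_component (sublevel r1) (pos u) x"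
proof -
  have same_edges: "sublevel_edges r2 = sublevel_edges r1"
    using assms(1,2) by (auto simp: sublevel_edges_def intro: in_vertices)
  obtain \<sigma> where \<sigma>: "\<sigma> \<in> K" "x \<in> gsimplex \<sigma>"
    using assms(5) realization_cases by (auto simp: sublevel_def)
  obtain w where w: "w \<in> \<sigma>" "f (pos w) \<le> f x" using exists_vertex_le[OF \<sigma>] by blast
  have fx: "f x \<le> r1" using assms(5) by (simp add: sublevel_def)
  note iff = sublevel_component_iff_edge_path[OF singleton_in_complex[OF assms(3)] \<sigma>(1)
      vertex_in_gsimplex[of u "{u}"] \<sigma>(2) _ w(1)]
  show ?thesis using iff[where r = r2] iff[where r = r1] same_edges assms w fx by auto
qed

section \<open>Paths and arcs in the merge tree\<close>

lemma merge_rel_iff: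
  "merge_rel X f x y \<longleftrightarrow> x \<in> X \<and> y \<in> X \<and> f x = f y \<and> connected_component (sublevel (f x)) x y"
  by (simp add: merge_rel_def sublevel_def)

abbreviation (input) \<pi> :: "'a \<Rightarrow> 'a set" where "\<pi> \<equiv> merge_class X f"
abbreviation (input) T :: "'a set topology" where "T \<equiv> merge_tree X f"

lemma merge_class_eqI:
  assumes "connected_component (sublevel r) x y" "f x = r" "f y = r"
  shows "\<pi> x = \<pi> y"
  using assms sublevel_componentD[OF assms(1)] merge_class_eq_iff merge_rel_iff by metis

lemma vertex_component_merge_class_closed:
  assumes "connected_component (sublevel r) (pos u) z" "x \<in> X" "\<pi> x = \<pi> z"
  shows "connected_component (sublevel r) (pos u) x"
proof -
  have "z \<in> X" "f z \<le> r" using sublevel_componentD[OF assms(1)] by blast+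
  then have "connected_component (sublevel (f z)) z x" "f z \<le> r"
    using merge_class_eq_iff[of z X x f] assms(2,3) by (auto simp: merge_rel_iff)
  then show ?thesis using assms(1) sublevel_component_mono connected_component_trans by blast
qed

text \<open>The image in the merge tree of the component of u in the sublevel set at r and the image
  of the rest of that sublevel set are closed and disjoint, so a connected set of classes below r
  meeting the first image lies inside it.\<close>
lemma connectedin_merge_tree_sublevel:
  assumes "connectedin T \<Gamma>" "\<Gamma> \<subseteq> \<pi> ` sublevel r" "u \<in> vertices K" "f (pos u) \<le> r"
    "\<pi> (pos u) \<in> \<Gamma>" "c \<in> \<Gamma>"
  shows "\<exists>x. c = \<pi> x \<and> connected_component (sublevel r) (pos u) x"
proof -
  define S where "S = connected_component_set (sublevel r) (pos u)"
  have sub: "sublevel r \<subseteq> X" by (auto simp: sublevel_def)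
  have S_sub: "S \<subseteq> sublevel r" by (auto simp: S_def dest: connected_component_in)
  have saturated: "x \<in> S" if "x \<in> X" "z \<in> S" "\<pi> x = \<pi> z" for x z
    using vertex_component_merge_class_closed that by (simp add: S_def)
  have pre_in: "{x \<in> X. \<pi> x \<in> \<pi> ` S} = S" using saturated S_sub sub by blast
  have pre_out: "{x \<in> X. \<pi> x \<in> \<pi> ` (sublevel r - S)} = sublevel r - S"
  proof (intro set_eqI iffI)
    fix x assume "x \<in> {x \<in> X. \<pi> x \<in> \<pi> ` (sublevel r - S)}"
    then obtain z where z: "x \<in> X" "z \<in> sublevel r" "z \<notin> S" "\<pi> x = \<pi> z" by auto
    then have "f x = f z" using merge_class_eq_iff[of x X z f] sub by (auto simp: merge_rel_def)
    then show "x \<in> sublevel r - S" using z saturated[of z x] sub by (auto simp: sublevel_def)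
  qed (use sub in auto)
  have "closedin T (\<pi> ` S)"
  proof (rule closedin_merge_treeI)
    show "\<pi> ` S \<subseteq> \<pi> ` X" using S_sub sub by blast
    show "closedin (top_of_set X) {x \<in> X. \<pi> x \<in> \<pi> ` S}"
      unfolding pre_in using S_sub sub closed_vertex_component(1)[OF assms(3,4)]
      by (intro closed_subset) (auto simp: S_def)
  qed
  moreover have "closedin T (\<pi> ` (sublevel r - S))"
  proof (rule closedin_merge_treeI)
    show "\<pi> ` (sublevel r - S) \<subseteq> \<pi> ` X" using sub by blast
    show "closedin (top_of_set X) {x \<in> X. \<pi> x \<in> \<pi> ` (sublevel r - S)}"
      unfolding pre_out using sub closed_vertex_component(2)[OF assms(3,4)]
      by (intro closed_subset) (auto simp: S_def)
  qed
  moreover have "\<pi> ` S \<inter> \<pi> ` (sublevel r - S) = {}" using saturated S_sub sub by blast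
  moreover have cover: "\<Gamma> \<subseteq> \<pi> ` S \<union> \<pi> ` (sublevel r - S)" using assms(2) by blast
  moreover have "pos u \<in> S"
    using vertex_in_realization[OF assms(3)] assms(4) by (simp add: S_def sublevel_def)
  then have "\<pi> ` S \<inter> \<Gamma> \<noteq> {}" using assms(5) by blast
  ultimately have "\<pi> ` (sublevel r - S) \<inter> \<Gamma> = {}"
    using assms(1) unfolding connectedin_closedin by blast
  then have "c \<in> \<pi> ` S" using cover assms(6) by blast
  then show ?thesis by (auto simp: S_def)
qed

lemma continuous_on_merge_fun_path:
  assumes "pathin T \<gamma>"
  shows "continuous_on {0..1} (\<lambda>t. merge_fun f (\<gamma> t))"
  using continuous_map_compose[OF assms[unfolded pathin_def]
      continuous_map_merge_fun[OF continuous_on_realization]]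
  by (simp add: o_def)

lemma pathin_image_sublevel:
  assumes "pathin T \<gamma>" "{a..b} \<subseteq> {0..1}" "\<forall>t\<in>{a..b}. merge_fun f (\<gamma> t) \<le> r"
  shows "\<gamma> ` {a..b} \<subseteq> \<pi> ` sublevel r"
proof
  fix c assume "c \<in> \<gamma> ` {a..b}"
  then obtain t where t: "t \<in> {a..b}" "c = \<gamma> t" by blast
  obtain x where x: "x \<in> X" "\<gamma> t = \<pi> x"
    using pathin_merge_tree_cases[OF assms(1)] t assms(2) by blast
  have "f x \<le> r" using assms(3) t(1) merge_fun_merge_class[OF x(1)] x(2) by fastforce
  then show "c \<in> \<pi> ` sublevel r" using x t by (auto simp: sublevel_def)
qed

lemma pathin_vertex_component:
  assumes "pathin T \<gamma>" "{a..b} \<subseteq> {0..1}" "t0 \<in> {a..b}" "\<gamma> t0 = \<pi> (pos w)" "w \<in> vertices K"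
    "\<forall>t\<in>{a..b}. merge_fun f (\<gamma> t) \<le> r" "f (pos w) \<le> r" "s \<in> {a..b}"
  obtains x where "\<gamma> s = \<pi> x" "f x = merge_fun f (\<gamma> s)" "connected_component (sublevel r) (pos w) x"
proof -
  have "\<pi> (pos w) \<in> \<gamma> ` {a..b}" "\<gamma> s \<in> \<gamma> ` {a..b}" using assms(3,4,8) by (metis imageI)+
  then obtain x where x: "\<gamma> s = \<pi> x" "connected_component (sublevel r) (pos w) x"
    using connectedin_merge_tree_sublevel[OF connectedin_pathin_image[OF assms(1,2)]
        pathin_image_sublevel[OF assms(1,2,6)] assms(5,7)] by blast
  show thesis
  proof (rule that[OF x(1) _ x(2)])
    show "f x = merge_fun f (\<gamma> s)"
      using x(1) merge_fun_merge_class[OF sublevel_componentD(3)[OF x(2)]] by simp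
  qed
qed

lemma pathin_below_imp_sublevel_component:
  assumes "pathin T \<gamma>" "i \<in> vertices K" "k \<in> vertices K"
    "\<gamma> 0 = \<pi> (pos i)" "\<gamma> 1 = \<pi> (pos k)" "\<forall>t\<in>{0..1}. merge_fun f (\<gamma> t) \<le> r"
  shows "connected_component (sublevel r) (pos i) (pos k)"
proof -
  have "merge_fun f (\<gamma> 0) \<le> r" using assms(6) by simp
  then have fi: "f (pos i) \<le> r"
    using assms(4) merge_fun_merge_class[OF vertex_in_realization[OF assms(2)]] by simp
  obtain x where x: "\<gamma> 1 = \<pi> x" "f x = merge_fun f (\<gamma> 1)" "connected_component (sublevel r) (pos i) x"
    by (rule pathin_vertex_component[OF assms(1) _ _ assms(4,2,6) fi, where s = 1]) auto
  have "merge_rel X f (pos k) x"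
    using merge_class_eq_iff[OF vertex_in_realization[OF assms(3)] sublevel_componentD(3)[OF x(3)]]
      x(1) assms(5) by simp
  then have "connected_component (sublevel r) (pos k) x"
    using sublevel_componentD(4)[OF x(3)] sublevel_component_mono by (auto simp: merge_rel_iff)
  then show ?thesis using x(3) connected_component_sym connected_component_trans by blast
qed

lemma pathin_point_in_vertex_component:
  assumes p: "pathin T \<gamma>" and ab: "{a..b} \<subseteq> {0..1}" "t0 \<in> {a..b}" "s \<in> {a..b}"
    and w: "\<gamma> t0 = \<pi> (pos w)" "w \<in> vertices K" "f (pos w) \<le> merge_fun f (\<gamma> s)"
    and gap: "\<And>t w'. t \<in> {a..b} \<Longrightarrow> w' \<in> vertices K \<Longrightarrow> f (pos w') \<le> merge_fun f (\<gamma> t) \<Longrightarrow>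
      f (pos w') \<le> merge_fun f (\<gamma> s)"
  obtains x where "\<gamma> s = \<pi> x" "f x = merge_fun f (\<gamma> s)"
    "connected_component (sublevel (merge_fun f (\<gamma> s))) (pos w) x"
proof -
  let ?g = "\<lambda>t. merge_fun f (\<gamma> t)"
  obtain tm where tm: "tm \<in> {a..b}" "\<forall>t\<in>{a..b}. ?g t \<le> ?g tm"
    using continuous_attains_sup[OF compact_Icc _ continuous_on_subset[OF continuous_on_merge_fun_path[OF p] ab(1)]]
      ab(2) by auto
  have le: "?g s \<le> ?g tm" using tm(2) ab(3) by blast
  obtain x where x: "\<gamma> s = \<pi> x" "f x = ?g s" "connected_component (sublevel (?g tm)) (pos w) x"
    by (rule pathin_vertex_component[OF p ab(1,2) w(1,2) tm(2), where s = s]) (use w(3) le ab(3) in auto)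
  have "connected_component (sublevel (?g s)) (pos w) x"
  proof (rule sublevel_component_stable[OF le _ w(2,3) _ x(3)])
    show "\<forall>w'\<in>vertices K. f (pos w') \<le> ?g tm \<longrightarrow> f (pos w') \<le> ?g s" using gap tm(1) by blast
    show "x \<in> sublevel (?g s)" using x(2) sublevel_componentD(3)[OF x(3)] by (simp add: sublevel_def)
  qed
  then show thesis by (rule that[OF x(1,2)])
qed

lemma arc_points_eqI:
  assumes "inj_on \<gamma> {0..1}" "s \<in> {0..1}" "s' \<in> {0..1}" "\<gamma> s = \<pi> x" "\<gamma> s' = \<pi> y"
    "connected_component (sublevel u) x y" "f x = u" "f y = u"
  shows "s = s'"
proof -
  have "\<gamma> s = \<gamma> s'" using merge_class_eqI[OF assms(6-8)] assms(4,5) by simp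
  then show ?thesis using inj_onD[OF assms(1)] assms(2,3) by blast
qed

lemma arc_merge_fun_max_unique:
  assumes p: "pathin T \<gamma>" and inj: "inj_on \<gamma> {0..1}" and i: "i \<in> vertices K"
    and \<gamma>0: "\<gamma> 0 = \<pi> (pos i)" and le: "\<forall>t\<in>{0..1}. merge_fun f (\<gamma> t) \<le> v" and fi: "f (pos i) \<le> v"
    and t: "t \<in> {0..1}" "merge_fun f (\<gamma> t) = v" and t': "t' \<in> {0..1}" "merge_fun f (\<gamma> t') = v"
  shows "t = t'"
proof -
  obtain x where x: "\<gamma> t = \<pi> x" "f x = merge_fun f (\<gamma> t)" "connected_component (sublevel v) (pos i) x"
    by (rule pathin_vertex_component[OF p _ _ \<gamma>0 i le fi, where s = t]) (use t in auto)
  obtain y where y: "\<gamma> t' = \<pi> y" "f y = merge_fun f (\<gamma> t')" "connected_component (sublevel v) (pos i) y"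
    by (rule pathin_vertex_component[OF p _ _ \<gamma>0 i le fi, where s = t']) (use t' in auto)
  have "connected_component (sublevel v) x y"
    using x(3) y(3) connected_component_sym connected_component_trans by blast
  then show ?thesis using arc_points_eqI[OF inj t(1) t'(1) x(1) y(1)] x(2) y(2) t(2) t'(2) by simp
qed

text \<open>If the arc rose above r, its strict maximum would be flanked by two points at a common
  level u with no vertex value between u and the maximum; each flank reaches its endpoint vertex
  inside the sublevel set at u, so both points would lie in one merge class.\<close>
lemma arc_below_of_sublevel_component:
  assumes p: "pathin T \<gamma>" and inj: "inj_on \<gamma> {0..1}" and i: "i \<in> vertices K" and k: "k \<in> vertices K"
    and \<gamma>0: "\<gamma> 0 = \<pi> (pos i)" and \<gamma>1: "\<gamma> 1 = \<pi> (pos k)"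
    and ik: "connected_component (sublevel r) (pos i) (pos k)"
  shows "\<forall>t\<in>{0..1}. merge_fun f (\<gamma> t) \<le> r"
proof (rule ccontr)
  assume above: "\<not> ?thesis"
  define g where "g t = merge_fun f (\<gamma> t)" for t
  obtain ts where ts: "ts \<in> {0..1}" "\<forall>t\<in>{0..1}. g t \<le> g ts"
    using continuous_attains_sup[OF compact_Icc _ continuous_on_merge_fun_path[OF p]] by (auto simp: g_def)
  define v where "v = g ts"
  have rv: "r < v" using above ts by (force simp: v_def g_def)
  have fi: "f (pos i) \<le> r" "f (pos k) \<le> r" using sublevel_componentD[OF ik] by auto
  have "g 0 = f (pos i)" "g 1 = f (pos k)"
    using \<gamma>0 \<gamma>1 merge_fun_merge_class[OF vertex_in_realization[OF i]]
      merge_fun_merge_class[OF vertex_in_realization[OF k]] by (simp_all add: g_def)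
  then have ts01: "0 < ts" "ts < 1" using ts(1) fi rv by (auto simp: v_def less_le)
  have strict: "g t < v" if "t \<in> {0..1}" "t \<noteq> ts" for t
    using arc_merge_fun_max_unique[OF p inj i \<gamma>0 _ _ that(1) _ ts(1)] ts(2) that fi rv
    by (force simp: g_def v_def)
  obtain h where h: "r \<le> h" "h < v" "\<forall>a\<in>vertex_values. a < v \<longrightarrow> a \<le> h"
    by (rule finite_gap_below[OF finite_vertex_values rv])
  obtain s1 s2 where s: "0 \<le> s1" "s1 < ts" "ts < s2" "s2 \<le> 1" "g s1 = g s2" "h < g s1"
    using strict_max_level_crossing[of g ts h] continuous_on_merge_fun_path[OF p] ts01 strict h(2)
    by (auto simp: v_def g_def)
  have gap: "f (pos w) \<le> g s1" if "t \<in> {0..1}" "t \<noteq> ts" "w \<in> vertices K" "f (pos w) \<le> g t" for t w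
    using strict[OF that(1,2)] h(3) that(3,4) s(6) by (force simp: vertex_values_def)
  have gap_left: "f (pos w) \<le> g s1" if "t \<in> {0..s1}" "w \<in> vertices K" "f (pos w) \<le> g t" for t w
    using gap[of t w] that s ts01 by auto
  have gap_right: "f (pos w) \<le> g s2" if "t \<in> {s2..1}" "w \<in> vertices K" "f (pos w) \<le> g t" for t w
    using gap[of t w] that s ts01 by auto
  obtain x1 where x1: "\<gamma> s1 = \<pi> x1" "f x1 = g s1" "connected_component (sublevel (g s1)) (pos i) x1"
    by (rule pathin_point_in_vertex_component[OF p _ _ _ \<gamma>0 i _ gap_left[unfolded g_def], of 0])
       (use s ts01 fi h in \<open>auto simp: g_def\<close>)
  obtain x2 where x2: "\<gamma> s2 = \<pi> x2" "f x2 = g s2" "connected_component (sublevel (g s2)) (pos k) x2"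
    by (rule pathin_point_in_vertex_component[OF p _ _ _ \<gamma>1 k _ gap_right[unfolded g_def], of _ 1])
       (use s ts01 fi h in \<open>auto simp: g_def\<close>)
  have "connected_component (sublevel (g s1)) (pos i) (pos k)"
    using sublevel_component_mono[OF _ ik] h(1) s(6) by simp
  then have "connected_component (sublevel (g s1)) x1 x2"
    using x1(3) x2(3)[folded s(5)] connected_component_sym connected_component_trans by metis
  moreover have "s1 \<in> {0..1}" "s2 \<in> {0..1}" using s ts01 by auto
  ultimately have "s1 = s2" using arc_points_eqI[OF inj _ _ x1(1) x2(1) _ x1(2) x2(2)[folded s(5)]] by blast
  then show False using s by simp
qed

lemma vertex_component_at_vertex_value:
  assumes "u \<in> vertices K" "j \<in> vertices K" "f (pos u) \<le> r"
    "connected_component (sublevel r) (pos u) (pos j)"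
  obtains r' where "r' \<in> vertex_values" "f (pos u) \<le> r'" "r' \<le> r"
    "connected_component (sublevel r') (pos u) (pos j)"
proof -
  define A where "A = {s \<in> vertex_values. s \<le> r}"
  have A: "finite A" "f (pos u) \<in> A" "f (pos j) \<in> A"
    using finite_vertex_values assms sublevel_componentD(4)[OF assms(4)]
    by (auto simp: A_def vertex_values_def)
  define r' where "r' = Max A"
  have r': "r' \<in> A" unfolding r'_def using A(1,2) by (intro Max_in) auto
  have ge: "\<And>s. s \<in> A \<Longrightarrow> s \<le> r'" unfolding r'_def using A(1) by simp
  have "connected_component (sublevel r') (pos u) (pos j)"
  proof (rule sublevel_component_stable[OF _ _ assms(1) _ _ assms(4)])
    show "r' \<le> r" using r' by (simp add: A_def)
    show "\<forall>w\<in>vertices K. f (pos w) \<le> r \<longrightarrow> f (pos w) \<le> r'"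
      using ge by (auto simp: A_def vertex_values_def)
    show "f (pos u) \<le> r'" using ge A(2) .
    show "pos j \<in> sublevel r'"
      using vertex_in_realization[OF assms(2)] ge[OF A(3)] by (simp add: sublevel_def)
  qed
  then show thesis using that r' ge A(2) by (auto simp: A_def)
qed

lemma gsimplex_component_iff:
  assumes "\<sigma> \<in> K" "x \<in> gsimplex \<sigma>" "f x \<le> r"
  shows "connected_component (sublevel r) x y \<longleftrightarrow>
           (\<exists>u\<in>\<sigma>. f (pos u) \<le> r \<and> connected_component (sublevel r) (pos u) y)"
proof
  assume xy: "connected_component (sublevel r) x y"
  obtain u where u: "u \<in> \<sigma>" "f (pos u) \<le> f x" using exists_vertex_le[OF assms(1,2)] by blast
  have "connected_component (sublevel r) (pos u) x"
    using sublevel_component_in_gsimplex[OF assms(1) vertex_in_gsimplex[OF u(1)] assms(2)] u(2) assms(3)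
    by simp
  then have "connected_component (sublevel r) (pos u) y" using xy connected_component_trans by blast
  moreover have "f (pos u) \<le> r" using u(2) assms(3) by simp
  ultimately show "\<exists>u\<in>\<sigma>. f (pos u) \<le> r \<and> connected_component (sublevel r) (pos u) y"
    using u(1) by blast
next
  assume "\<exists>u\<in>\<sigma>. f (pos u) \<le> r \<and> connected_component (sublevel r) (pos u) y"
  then obtain u where u: "u \<in> \<sigma>" "f (pos u) \<le> r" "connected_component (sublevel r) (pos u) y" by blast
  have "connected_component (sublevel r) x (pos u)"
    using sublevel_component_in_gsimplex[OF assms(1,2) vertex_in_gsimplex[OF u(1)]] u(2) assms(3) by simp
  then show "connected_component (sublevel r) x y" using u(3) connected_component_trans by blast
qed

end

section \<open>The LCA matrix\<close>

locale connected_pl_function = pl_function K pos f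
  for K :: "'v set set" and pos :: "'v \<Rightarrow> 'a::euclidean_space" and f :: "'a \<Rightarrow> real" +
  assumes connected_realization: "connected X"
begin

definition top_value :: real where "top_value = Max vertex_values"

lemma top_value_in: "vertices K \<noteq> {} \<Longrightarrow> top_value \<in> vertex_values"
  unfolding top_value_def using finite_vertex_values by (intro Max_in) (auto simp: vertex_values_def)

lemma vertex_le_top_value: "w \<in> vertices K \<Longrightarrow> f (pos w) \<le> top_value"
  unfolding top_value_def vertex_values_def using finite_vertex_values[unfolded vertex_values_def]
  by (intro Max_ge) auto

lemma le_top_value: "x \<in> X \<Longrightarrow> f x \<le> top_value"
proof -
  assume "x \<in> X"
  then obtain \<sigma> where \<sigma>: "\<sigma> \<in> K" "x \<in> gsimplex \<sigma>" using realization_cases by blast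
  then obtain w where "w \<in> \<sigma>" "f x \<le> f (pos w)" using exists_vertex_ge by blast
  then show ?thesis using vertex_le_top_value[of w] in_vertices[OF \<sigma>(1)] by force
qed

lemma sublevel_top_value_component: "x \<in> X \<Longrightarrow> y \<in> X \<Longrightarrow> connected_component (sublevel top_value) x y"
proof -
  have "sublevel top_value = X" using le_top_value by (auto simp: sublevel_def)
  then show "x \<in> X \<Longrightarrow> y \<in> X \<Longrightarrow> connected_component (sublevel top_value) x y"
    using connected_realization connected_iff_connected_component by metis
qed

text \<open>The height at which x joins the vertex j. Merging only happens at f x or at vertex values,
  so restricting the candidates to these keeps the minimum over a finite set.\<close>
definition join_level :: "'v \<Rightarrow> 'a \<Rightarrow> real" where
  "join_level j x = Min {r \<in> insert (f x) vertex_values. f x \<le> r \<and> connected_component (sublevel r) x (pos j)}"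

lemma join_level_mem:
  assumes "x \<in> X" "j \<in> vertices K"
  shows "join_level j x \<in> {r \<in> insert (f x) vertex_values. f x \<le> r \<and> connected_component (sublevel r) x (pos j)}"
  unfolding join_level_def
proof (rule Min_in)
  show "finite {r \<in> insert (f x) vertex_values. f x \<le> r \<and> connected_component (sublevel r) x (pos j)}"
    using finite_vertex_values by simp
  have "top_value \<in> vertex_values" using top_value_in assms(2) by blast
  then show "{r \<in> insert (f x) vertex_values. f x \<le> r \<and> connected_component (sublevel r) x (pos j)} \<noteq> {}"
    using le_top_value[OF assms(1)] sublevel_top_value_component[OF assms(1) vertex_in_realization[OF assms(2)]]
    by blast
qed

lemma join_level_eqI:
  assumes "r \<in> insert (f x) vertex_values" "f x \<le> r" "connected_component (sublevel r) x (pos j)"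
    "\<And>s. s \<in> insert (f x) vertex_values \<Longrightarrow> f x \<le> s \<Longrightarrow> connected_component (sublevel s) x (pos j) \<Longrightarrow> r \<le> s"
  shows "join_level j x = r"
  unfolding join_level_def using assms finite_vertex_values by (intro Min_eqI) auto

lemma join_level_merge_class:
  assumes "x \<in> X" "y \<in> X" "\<pi> x = \<pi> y"
  shows "join_level j x = join_level j y"
proof -
  have fxy: "f x = f y" and xy: "connected_component (sublevel (f x)) x y"
    using merge_class_eq_iff[OF assms(1,2)] assms(3) by (auto simp: merge_rel_iff)
  have "connected_component (sublevel r) x (pos j) \<longleftrightarrow> connected_component (sublevel r) y (pos j)"
    if "f x \<le> r" for r
    using sublevel_component_mono[OF that xy] connected_component_sym connected_component_trans by metis
  then show ?thesis unfolding join_level_def using fxy by (metis (no_types, lifting) order.refl)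
qed

lemma join_level_low_vertex:
  assumes "\<sigma> \<in> K" "x \<in> gsimplex \<sigma>" "u \<in> \<sigma>" "f (pos u) \<le> f x"
  shows "join_level u x = f x"
  by (rule join_level_eqI)
     (use sublevel_component_in_gsimplex[OF assms(1,2) vertex_in_gsimplex[OF assms(3)]] assms(4) in auto)

lemma merge_class_eq_of_join_level:
  assumes "x \<in> X" "y \<in> X" "f x = f y" "\<forall>j\<in>vertices K. join_level j x = join_level j y"
  shows "\<pi> x = \<pi> y"
proof -
  obtain \<sigma> where \<sigma>: "\<sigma> \<in> K" "x \<in> gsimplex \<sigma>" using realization_cases assms(1) by blast
  obtain u where u: "u \<in> \<sigma>" "f (pos u) \<le> f x" using exists_vertex_le[OF \<sigma>] by blast
  have "join_level u y = f y"
    using join_level_low_vertex[OF \<sigma> u] assms(3,4) in_vertices[OF \<sigma>(1) u(1)] by auto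
  then have "connected_component (sublevel (f x)) y (pos u)"
    using join_level_mem[OF assms(2) in_vertices[OF \<sigma>(1) u(1)]] assms(3) by simp
  moreover have "connected_component (sublevel (f x)) x (pos u)"
    using sublevel_component_in_gsimplex[OF \<sigma> vertex_in_gsimplex[OF u(1)]] u(2) by simp
  ultimately have "connected_component (sublevel (f x)) x y"
    using connected_component_sym connected_component_trans by metis
  then show ?thesis using merge_class_eqI assms(3) by simp
qed

text \<open>The constant is the least vertex value at which some vertex of the simplex joins j.\<close>
lemma join_level_on_gsimplex:
  assumes \<sigma>: "\<sigma> \<in> K" and j: "j \<in> vertices K"
  obtains c where "\<forall>x\<in>gsimplex \<sigma>. join_level j x = max (f x) c"
proof -
  define P where "P r \<longleftrightarrow> (\<exists>u\<in>\<sigma>. f (pos u) \<le> r \<and> connected_component (sublevel r) (pos u) (pos j))" for r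
  have P_mono: "P s" if Pr: "P r" and rs: "r \<le> s" for r s
    using Pr rs sublevel_component_mono unfolding P_def by (meson order_trans)
  have P_vertex_value: "\<exists>r'\<in>vertex_values. r' \<le> r \<and> P r'" if Pr: "P r" for r
  proof -
    obtain u where u: "u \<in> \<sigma>" "f (pos u) \<le> r" "connected_component (sublevel r) (pos u) (pos j)"
      using Pr by (auto simp: P_def)
    obtain r' where "r' \<in> vertex_values" "f (pos u) \<le> r'" "r' \<le> r"
        "connected_component (sublevel r') (pos u) (pos j)"
      using vertex_component_at_vertex_value[OF in_vertices[OF \<sigma> u(1)] j u(2,3)] .
    then show ?thesis using u(1) unfolding P_def by blast
  qed
  obtain u0 where u0: "u0 \<in> \<sigma>" using simplex_nonempty[OF \<sigma>] by blast
  have "P top_value"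
    unfolding P_def using u0 vertex_le_top_value[OF in_vertices[OF \<sigma> u0]]
      sublevel_top_value_component[OF vertex_in_realization[OF in_vertices[OF \<sigma> u0]] vertex_in_realization[OF j]]
    by blast
  moreover have "top_value \<in> vertex_values" using top_value_in j by blast
  ultimately have ne: "{r \<in> vertex_values. P r} \<noteq> {}" by blast
  define c where "c = Min {r \<in> vertex_values. P r}"
  have c: "c \<in> vertex_values" "P c" and c_min: "\<And>r. r \<in> vertex_values \<Longrightarrow> P r \<Longrightarrow> c \<le> r"
    using Min_in[OF _ ne] finite_vertex_values unfolding c_def by auto
  have "join_level j x = max (f x) c" if x: "x \<in> gsimplex \<sigma>" for x
  proof (rule join_level_eqI)
    have iff: "connected_component (sublevel r) x (pos j) \<longleftrightarrow> P r" if "f x \<le> r" for r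
      using gsimplex_component_iff[OF \<sigma> x that] by (simp add: P_def)
    show "max (f x) c \<in> insert (f x) vertex_values" using c(1) by (simp add: max_def)
    show "f x \<le> max (f x) c" by simp
    show "connected_component (sublevel (max (f x) c)) x (pos j)"
      using iff P_mono[OF c(2)] by simp
    fix s assume s: "s \<in> insert (f x) vertex_values" "f x \<le> s" "connected_component (sublevel s) x (pos j)"
    then obtain r' where "r' \<in> vertex_values" "r' \<le> s" "P r'" using iff P_vertex_value by blast
    then show "max (f x) c \<le> s" using c_min s(2) by fastforce
  qed
  then show thesis using that by blast
qed

lemma continuous_on_join_level:
  assumes "j \<in> vertices K"
  shows "continuous_on X (join_level j)"
  unfolding realization_eq
proof (rule continuous_on_closed_Union)
  fix \<sigma> assume \<sigma>: "\<sigma> \<in> K"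
  obtain c where c: "\<forall>x\<in>gsimplex \<sigma>. join_level j x = max (f x) c"
    using join_level_on_gsimplex[OF \<sigma> assms] by blast
  have "continuous_on (gsimplex \<sigma>) (\<lambda>x. max (f x) c)"
    by (intro continuous_intros continuous_on_gsimplex[OF \<sigma>])
  then show "continuous_on (gsimplex \<sigma>) (join_level j)"
    by (rule continuous_on_eq) (use c in simp)
qed (auto simp: finite_complex closed_gsimplex)

text \<open>Merge classes are separated by f together with the join levels to all vertices; putting these
  finitely many coordinates on hat functions embeds the merge tree into a Banach space, where
  paths contain arcs.\<close>
lemma merge_tree_embedding:
  obtains \<Phi> :: "'a \<Rightarrow> (real \<Rightarrow>\<^sub>C real)"
  where "continuous_on X \<Phi>" "\<forall>x\<in>X. \<forall>y\<in>X. \<Phi> x = \<Phi> y \<longleftrightarrow> \<pi> x = \<pi> y"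
proof -
  define N where "N = card (vertices K)"
  obtain en where en: "bij_betw en {0..<N} (vertices K)"
    using ex_bij_betw_nat_finite[OF finite_vertices] unfolding N_def by blast
  define c where "c x k = (if k < N then join_level (en k) x else f x)" for x k
  define \<Phi> where "\<Phi> x = (\<Sum>k<Suc N. c x k *\<^sub>R hat_function k)" for x
  have en_vertex: "en k \<in> vertices K" if "k < N" for k using en that by (auto simp: bij_betw_def)
  have all_vertices: "(\<forall>k<N. Q (en k)) \<longleftrightarrow> (\<forall>j\<in>vertices K. Q j)" for Q
  proof -
    have "vertices K = en ` {0..<N}" using en by (simp add: bij_betw_def)
    then show ?thesis by auto
  qed
  have "continuous_on X (\<lambda>x. c x k)" for k
    using continuous_on_join_level[OF en_vertex] continuous_on_realization
    by (cases "k < N") (simp_all add: c_def)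
  then have cont: "continuous_on X \<Phi>"
    unfolding \<Phi>_def by (intro continuous_on_sum continuous_on_scaleR continuous_on_const)
  have "\<Phi> x = \<Phi> y \<longleftrightarrow> \<pi> x = \<pi> y" if "x \<in> X" "y \<in> X" for x y
  proof -
    have "\<Phi> x = \<Phi> y \<longleftrightarrow> f x = f y \<and> (\<forall>k<N. join_level (en k) x = join_level (en k) y)"
      unfolding \<Phi>_def hat_combination_eq_iff c_def by (auto simp: less_Suc_eq)
    also have "\<dots> \<longleftrightarrow> f x = f y \<and> (\<forall>j\<in>vertices K. join_level j x = join_level j y)"
      using all_vertices[of "\<lambda>j. join_level j x = join_level j y"] by simp
    also have "\<dots> \<longleftrightarrow> \<pi> x = \<pi> y"
      using merge_class_eq_of_join_level[OF that] join_level_merge_class[OF that]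
        merge_class_eq_iff[OF that] by (auto simp: merge_rel_def)
    finally show ?thesis .
  qed
  then show thesis using that[OF cont] by blast
qed

lemma vertices_path_component:
  assumes i: "i \<in> vertices K" and k: "k \<in> vertices K"
  shows "path_component X (pos i) (pos k)"
proof -
  have "connected_component (sublevel top_value) (pos i) (pos k)"
    using sublevel_top_value_component vertex_in_realization i k by blast
  then have "(i, k) \<in> (sublevel_edges top_value)\<^sup>*"
    using sublevel_component_iff_edge_path[OF singleton_in_complex[OF i] singleton_in_complex[OF k]
        vertex_in_gsimplex[of i "{i}"] vertex_in_gsimplex[of k "{k}"]]
      vertex_le_top_value[OF i] vertex_le_top_value[OF k] by simp
  then show ?thesis
  proof (induction rule: rtrancl_induct)
    case base then show ?case using path_component_refl vertex_in_realization[OF i] by blast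
  next
    case (step y z)
    then obtain \<sigma> where \<sigma>: "\<sigma> \<in> K" "y \<in> \<sigma>" "z \<in> \<sigma>" by (auto simp: sublevel_edges_def)
    have "closed_segment (pos y) (pos z) \<subseteq> X"
      using closed_segment_subset[OF vertex_in_gsimplex[OF \<sigma>(2)] vertex_in_gsimplex[OF \<sigma>(3)] convex_gsimplex]
        gsimplex_subset_realization[OF \<sigma>(1)] by blast
    then show ?case using step.IH path_component_linepath path_component_trans by blast
  qed
qed

lemma merge_tree_arc_exists:
  assumes i: "i \<in> vertices K" and k: "k \<in> vertices K" and ne: "\<pi> (pos i) \<noteq> \<pi> (pos k)"
  obtains \<gamma> where "pathin T \<gamma>" "inj_on \<gamma> {0..1}" "\<gamma> 0 = \<pi> (pos i)" "\<gamma> 1 = \<pi> (pos k)"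
proof -
  obtain g where g: "path g" "path_image g \<subseteq> X" "pathstart g = pos i" "pathfinish g = pos k"
    using vertices_path_component[OF i k] unfolding path_component_def by blast
  have "continuous_map (subtopology euclideanreal {0..1}) (top_of_set X) g"
  proof (rule continuous_map_into_subtopology)
    show "continuous_map (subtopology euclideanreal {0..1}) euclidean g" using g(1) by (simp add: path_def)
    show "g \<in> topspace (subtopology euclideanreal {0..1}) \<rightarrow> X" using g(2) by (auto simp: path_image_def)
  qed
  then have p: "pathin T (\<pi> \<circ> g)"
    unfolding pathin_def by (rule continuous_map_compose[OF _ continuous_map_merge_class])
  obtain \<Phi> :: "'a \<Rightarrow> (real \<Rightarrow>\<^sub>C real)"
    where \<Phi>: "continuous_on X \<Phi>" "\<forall>x\<in>X. \<forall>y\<in>X. \<Phi> x = \<Phi> y \<longleftrightarrow> \<pi> x = \<pi> y"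
    by (rule merge_tree_embedding)
  define \<Phi>' where "\<Phi>' c = \<Phi> (SOME x. x \<in> c)" for c
  have \<Phi>'_class: "\<Phi>' (\<pi> x) = \<Phi> x" if "x \<in> X" for x
  proof -
    have "(SOME z. z \<in> \<pi> x) \<in> \<pi> x" using merge_class_self[OF that] by (rule someI)
    then show ?thesis unfolding \<Phi>'_def using mem_merge_class(1,2) \<Phi>(2) that by metis
  qed
  have cont: "continuous_map T euclidean \<Phi>'"
    unfolding \<Phi>'_def[abs_def] by (rule continuous_map_from_merge_tree[OF \<Phi>(1)]) (use \<Phi>(2) in blast)
  have inj: "inj_on \<Phi>' ((\<pi> \<circ> g) ` {0..1})"
  proof (rule inj_onI)
    fix c c' assume "c \<in> (\<pi> \<circ> g) ` {0..1}" "c' \<in> (\<pi> \<circ> g) ` {0..1}" and eq: "\<Phi>' c = \<Phi>' c'"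
    then obtain t t' where t: "t \<in> {0..1}" "t' \<in> {0..1}" "c = \<pi> (g t)" "c' = \<pi> (g t')" by auto
    then have "g t \<in> X" "g t' \<in> X" using g(2) by (auto simp: path_image_def)
    then show "c = c'" using eq t(3,4) \<Phi>'_class \<Phi>(2) by simp
  qed
  have ends: "(\<pi> \<circ> g) 0 = \<pi> (pos i)" "(\<pi> \<circ> g) 1 = \<pi> (pos k)"
    using g(3,4) by (auto simp: pathstart_def pathfinish_def)
  show thesis
    by (rule pathin_contains_arc_by_embedding[OF p cont inj]) (use ne ends that in simp_all)
qed

lemma lca_matrix_le_iff:
  assumes i: "i \<in> vertices K" and k: "k \<in> vertices K"
  shows "lca_matrix K pos f i k \<le> r \<longleftrightarrow> connected_component (sublevel r) (pos i) (pos k)"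
proof (cases "\<pi> (pos i) = \<pi> (pos k)")
  case True
  have iX: "pos i \<in> X" and kX: "pos k \<in> X" using vertex_in_realization i k by auto
  have ik: "f (pos i) = f (pos k)" "connected_component (sublevel (f (pos i))) (pos i) (pos k)"
    using merge_class_eq_iff[OF iX kX] True by (auto simp: merge_rel_iff)
  have "lca_matrix K pos f i k = f (pos i)"
    unfolding lca_matrix_def Let_def using True merge_fun_merge_class[OF kX, of f] ik(1) by simp
  then show ?thesis
    using ik sublevel_component_mono sublevel_componentD(2) by metis
next
  case False
  define P where "P m \<longleftrightarrow> (\<exists>\<gamma>. pathin T \<gamma> \<and> inj_on \<gamma> {0..1} \<and> \<gamma> 0 = \<pi> (pos i) \<and>
      \<gamma> 1 = \<pi> (pos k) \<and> m = Sup (merge_fun f ` \<gamma> ` {0..1}))" for m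
  have lca: "lca_matrix K pos f i k = (SOME m. P m)"
    unfolding lca_matrix_def Let_def P_def using False by simp
  obtain \<gamma>0 where "pathin T \<gamma>0" "inj_on \<gamma>0 {0..1}" "\<gamma>0 0 = \<pi> (pos i)" "\<gamma>0 1 = \<pi> (pos k)"
    using merge_tree_arc_exists[OF i k False] by blast
  then have "P (Sup (merge_fun f ` \<gamma>0 ` {0..1}))" unfolding P_def by blast
  then have "P (SOME m. P m)" by (rule someI)
  then obtain \<gamma> where \<gamma>: "pathin T \<gamma>" "inj_on \<gamma> {0..1}" "\<gamma> 0 = \<pi> (pos i)" "\<gamma> 1 = \<pi> (pos k)"
      and lca_eq: "lca_matrix K pos f i k = Sup ((\<lambda>t. merge_fun f (\<gamma> t)) ` {0..1})"
    unfolding P_def lca by (auto simp: image_image)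
  have "bdd_above ((\<lambda>t. merge_fun f (\<gamma> t)) ` {0..1})"
    using compact_continuous_image[OF continuous_on_merge_fun_path[OF \<gamma>(1)]]
    by (intro bounded_imp_bdd_above compact_imp_bounded) simp
  then have "lca_matrix K pos f i k \<le> r \<longleftrightarrow> (\<forall>t\<in>{0..1}. merge_fun f (\<gamma> t) \<le> r)"
    unfolding lca_eq by (simp add: cSup_le_iff)
  also have "\<dots> \<longleftrightarrow> connected_component (sublevel r) (pos i) (pos k)"
    using pathin_below_imp_sublevel_component[OF \<gamma>(1) i k \<gamma>(3,4)]
      arc_below_of_sublevel_component[OF \<gamma>(1,2) i k \<gamma>(3,4)] by blast
  finally show ?thesis .
qed

end

section \<open>Stability of the Gromov-Wasserstein distance\<close>

lemma sum_diagonal_product: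
  fixes F :: "'v \<Rightarrow> 'v \<Rightarrow> 'a::semiring_0"
  assumes "finite V" "i \<in> V" "k \<in> V"
  shows "(\<Sum>j\<in>V. \<Sum>l\<in>V. F j l * (if i = j then a else 0) * (if k = l then b else 0)) = F i k * a * b"
proof -
  have "(\<Sum>j\<in>V. \<Sum>l\<in>V. F j l * (if i = j then a else 0) * (if k = l then b else 0))
      = (\<Sum>j\<in>V. if j = i then (\<Sum>l\<in>V. if l = k then F i k * a * b else 0) else 0)"
    by (auto intro!: sum.cong)
  also have "\<dots> = F i k * a * b" using assms by simp
  finally show ?thesis .
qed

lemma dGW_le_diagonal:
  assumes V: "finite V" and p: "prob_vector V p" and q: "0 < q"
    and W: "\<And>i k. i \<in> V \<Longrightarrow> k \<in> V \<Longrightarrow> \<bar>W1 i k - W2 i k\<bar> \<le> \<epsilon>"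
  shows "dGW q V p W1 V p W2 \<le> \<epsilon> / 2"
proof -
  have p0: "\<forall>v\<in>V. 0 \<le> p v" and p1: "sum p V = 1" using p by (auto simp: prob_vector_def)
  have "V \<noteq> {}" using p1 by auto
  then have \<epsilon>0: "0 \<le> \<epsilon>" using W by (meson abs_ge_zero all_not_in_conv order_trans)
  define C where "C i j = (if i = j then p i else 0)" for i j
  define cost where "cost C' = (\<Sum>i\<in>V. \<Sum>k\<in>V. \<Sum>j\<in>V. \<Sum>l\<in>V.
      \<bar>W1 i k - W2 j l\<bar> powr q * C' i j * C' k l) powr (1/q)" for C'
  have "C \<in> couplings V p V p"
    using p0 V by (auto simp: couplings_def C_def sum.delta sum.delta')
  then have "dGW q V p W1 V p W2 \<le> 1/2 * cost C"
    unfolding dGW_def cost_def[abs_def]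
    by (intro mult_left_mono cInf_lower bdd_belowI[of _ 0]) auto
  also have "cost C \<le> \<epsilon>"
  proof -
    have "(\<Sum>i\<in>V. \<Sum>k\<in>V. \<Sum>j\<in>V. \<Sum>l\<in>V. \<bar>W1 i k - W2 j l\<bar> powr q * C i j * C k l)
        = (\<Sum>i\<in>V. \<Sum>k\<in>V. \<bar>W1 i k - W2 i k\<bar> powr q * p i * p k)"
      using V by (intro sum.cong refl) (simp add: C_def sum_diagonal_product)
    also have "\<dots> \<le> (\<Sum>i\<in>V. \<Sum>k\<in>V. \<epsilon> powr q * p i * p k)"
      using W p0 q by (intro sum_mono mult_right_mono powr_mono2) auto
    also have "\<dots> = \<epsilon> powr q"
      using p1 by (simp add: sum_distrib_left[symmetric] sum_distrib_right[symmetric] mult.assoc)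
    finally have "(\<Sum>i\<in>V. \<Sum>k\<in>V. \<Sum>j\<in>V. \<Sum>l\<in>V. \<bar>W1 i k - W2 j l\<bar> powr q * C i j * C k l) \<le> \<epsilon> powr q" .
    moreover have "0 \<le> (\<Sum>i\<in>V. \<Sum>k\<in>V. \<Sum>j\<in>V. \<Sum>l\<in>V. \<bar>W1 i k - W2 j l\<bar> powr q * C i j * C k l)"
      using p0 by (intro sum_nonneg) (auto simp: C_def)
    ultimately have "cost C \<le> (\<epsilon> powr q) powr (1/q)"
      unfolding cost_def using q by (intro powr_mono2) auto
    also have "\<dots> = \<epsilon>" using q \<epsilon>0 by (simp add: powr_powr)
    finally show ?thesis .
  qed
  finally show ?thesis by simp
qed

lemma balanced_abs_le_Lq_norm:
  assumes V: "finite V" and p: "prob_vector V p" and bal: "balanced V p" and q: "0 < q"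
    and w: "w \<in> V"
  shows "\<bar>h w\<bar> \<le> real (card V) powr (2/q) * Lq_norm q V p h"
proof -
  define N where "N = real (card V)"
  have p0: "\<forall>v\<in>V. 0 \<le> p v" and p1: "sum p V = 1" using p by (auto simp: prob_vector_def)
  define m where "m = Max (p ` V)"
  have m: "m \<in> p ` V" "\<forall>v\<in>V. p v \<le> m"
    unfolding m_def using V w by (auto intro!: Max_in)
  have "1 \<le> N * m" using sum_bounded_above[of V p m] m(2) p1 by (simp add: N_def)
  then have "1 \<le> (N * m) * (N * m)" using mult_mono[of 1 "N * m" 1 "N * m"] by simp
  also have "\<dots> = N powr 2 * (m * m)" by (simp add: N_def power2_eq_square)
  also have "\<dots> \<le> N powr 2 * p w"
    using bal m(1) w unfolding balanced_def by (auto intro!: mult_left_mono)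
  finally have "1 \<le> (N powr 2 * p w) powr (1/q)" using q by (intro ge_one_powr_ge_zero) auto
  then have "\<bar>h w\<bar> \<le> N powr (2/q) * (\<bar>h w\<bar> * p w powr (1/q))"
    using p0 w by (simp add: powr_mult powr_powr mult_le_cancel_left1 mult.left_commute)
  also have "\<bar>h w\<bar> * p w powr (1/q) = (\<bar>h w\<bar> powr q * p w) powr (1/q)"
    using q p0 w by (simp add: powr_mult powr_powr)
  also have "\<dots> \<le> Lq_norm q V p h"
    unfolding Lq_norm_def using q p0 w V
    by (intro powr_mono2 member_le_sum) auto
  finally show ?thesis by (simp add: N_def mult_left_mono)
qed

lemma lca_matrix_le_of_le:
  assumes K: "geom_simplicial_complex K pos" "connected (realization K pos)"
    and f: "piecewise_linear K pos f" and g: "piecewise_linear K pos g"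
    and le: "\<forall>x\<in>realization K pos. g x \<le> f x + \<epsilon>" and i: "i \<in> vertices K" and k: "k \<in> vertices K"
  shows "lca_matrix K pos g i k \<le> lca_matrix K pos f i k + \<epsilon>"
proof -
  interpret F: connected_pl_function K pos f using K f by unfold_locales
  interpret G: connected_pl_function K pos g using K g by unfold_locales
  let ?a = "lca_matrix K pos f i k"
  have "connected_component (F.sublevel ?a) (pos i) (pos k)" using F.lca_matrix_le_iff[OF i k, of ?a] by simp
  moreover have "F.sublevel ?a \<subseteq> G.sublevel (?a + \<epsilon>)"
    using le by (fastforce simp: F.sublevel_def G.sublevel_def)
  ultimately show ?thesis
    using G.lca_matrix_le_iff[OF i k] connected_component_of_subset by blast
qed

theorem theorem2:
  fixes K :: "'v set set" and pos :: "'v \<Rightarrow> 'a::euclidean_space"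
    and f g :: "'a \<Rightarrow> real" and p :: "'v \<Rightarrow> real" and q :: real
  assumes "geom_simplicial_complex K pos"
    and "connected (realization K pos)"
    and "1 \<le> q"
    and "piecewise_linear K pos f" and "piecewise_linear K pos g"
    and "prob_vector (vertices K) p" and "balanced (vertices K) p"
  shows "dGW q (vertices K) p (lca_matrix K pos f) (vertices K) p (lca_matrix K pos g)
         \<le> 1/2 * real (card (vertices K)) powr (2/q)
              * Lq_norm q (vertices K) p (\<lambda>v. f (pos v) - g (pos v))"
proof -
  interpret geom_complex K pos using assms(1) by unfold_locales
  define \<epsilon> where "\<epsilon> = Max ((\<lambda>v. \<bar>f (pos v) - g (pos v)\<bar>) ` vertices K)"
  have "vertices K \<noteq> {}" using assms(6) by (auto simp: prob_vector_def)
  then obtain w where w: "w \<in> vertices K" "\<bar>f (pos w) - g (pos w)\<bar> = \<epsilon>"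
    using Max_in[of "(\<lambda>v. \<bar>f (pos v) - g (pos v)\<bar>) ` vertices K"] finite_vertices
    unfolding \<epsilon>_def by fastforce
  have "\<bar>f x - g x\<bar> \<le> \<epsilon>" if "x \<in> realization K pos" for x
    using pl_abs_le_vertex[OF piecewise_linear_diff[OF assms(4,5)] that] finite_vertices
    unfolding \<epsilon>_def by (auto intro: Max.coboundedI order_trans)
  then have "\<forall>x\<in>realization K pos. g x \<le> f x + \<epsilon>" "\<forall>x\<in>realization K pos. f x \<le> g x + \<epsilon>"
    by (smt (verit))+
  then have lca_diff: "\<bar>lca_matrix K pos f i k - lca_matrix K pos g i k\<bar> \<le> \<epsilon>"
    if "i \<in> vertices K" "k \<in> vertices K" for i k
    using lca_matrix_le_of_le[OF assms(1,2,4,5)] lca_matrix_le_of_le[OF assms(1,2,5,4)] that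
    unfolding abs_le_iff by fastforce
  have "dGW q (vertices K) p (lca_matrix K pos f) (vertices K) p (lca_matrix K pos g) \<le> \<epsilon> / 2"
    using assms(3) by (intro dGW_le_diagonal[OF finite_vertices assms(6) _ lca_diff]) auto
  moreover have "\<epsilon> \<le> real (card (vertices K)) powr (2/q) * Lq_norm q (vertices K) p (\<lambda>v. f (pos v) - g (pos v))"
    using balanced_abs_le_Lq_norm[OF finite_vertices assms(6,7) _ w(1), of q "\<lambda>v. f (pos v) - g (pos v)"]
      w(2) assms(3) by simp
  ultimately show ?thesis by simp
qed

end
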